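(* Let $k,m$ be positive integers, $\phi\in J_{k,m}(\mathcal O_K)$ with power series expansion $\phi=\sum_{\alpha,\beta\ge0}\chi_{\alpha,\beta}(\tau)z_1^\alpha z_2^\beta$, and $\nu\ge0$. Then $$D_\nu\phi=\nu!\sum_{\mu=0}^{\nu}(-4)^{\nu-\mu}(8\pi i m)^{\mu}\frac{(k+2\nu-\mu-2)!}{\mu!\,(k+\nu-2)!}\,\chi^{(\mu)}_{\nu-\mu,\nu-\mu}(\tau),$$ where $g^{(\mu)}=\bigl(\frac{\partial}{\partial\tau}\bigr)^\mu g$.
   Context: Notation: $\mathcal H$ is the upper half plane, $e(x)=e^{2\pi i x}$, $K=\mathbb Q(i)$, $\mathcal O_K=\mathbb Z[i]$, $\mathcal O_K^\times=\{\pm1,\pm i\}$, $N(x)=x\bar x$, $\mathcal O_K^\sharp=\frac i2\mathcal O_K$. For integers $k,m$, $\epsilon\in\mathcal O_K^\times$, $M=\begin{pmatrix}a&b\\c&d\end{pmatrix}\in SL(2,\mathbb R)$ and $\phi$ a function on $\mathcal H\times\mathbb C^2$: $(\phi|_{k,m}\epsilon M)(\tau,z_1,z_2)=\epsilon^{-k}(c\tau+d)^{-k}e^{-2\pi i m c z_1z_2/(c\tau+d)}\phi\bigl(M\tau,\tfrac{\epsilon z_1}{c\tau+d},\tfrac{\bar\epsilon z_2}{c\tau+d}\bigr)$, $M\tau=\frac{a\tau+b}{c\tau+d}$; for $\lambda,\mu\in\mathcal O_K$, $(\phi|_m[\lambda,\mu])(\tau,z_1,z_2)=e^{2\pi i m(N(\lambda)\tau+\bar\lambda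 z_1+\lambda z_2)}\phi(\tau,z_1+\lambda\tau+\mu,z_2+\bar\lambda\tau+\bar\mu)$. For positive integers $k,m$, $J_{k,m}(\mathcal O_K)$ is the space of holomorphic $\phi:\mathcal H\times\mathbb C^2\to\mathbb C$ with $\phi|_{k,m}\epsilon M=\phi$ for all $\epsilon\in\mathcal O_K^\times$, $M\in SL(2,\mathbb Z)$, $\phi|_m[\lambda,\mu]=\phi$ for all $\lambda,\mu\in\mathcal O_K$, and with a Fourier expansion $\phi=\sum_{n\ge0}\sum_{r\in\mathcal O_K^\sharp,\ nm\ge N(r)}c_\phi(n,r)\,e(n\tau+rz_1+\bar rz_2)$. The diagonal part of $\phi$ is $\phi_0=\sum_{\nu\ge0}\chi_{\nu,\nu}(\tau)(z_1z_2)^\nu$. Let $L_{k,m}=8\pi i m\partial_\tau-\frac{2k-2}{z_1}\partial_{z_2}-\frac{2k-2}{z_2}\partial_{z_1}-4\partial_{z_1}\partial_{z_2}$, $\tilde D_\nu=L_{k+2\nu-2,m}\circ\cdots\circ L_{k+2,m}\circ L_{k,m}$ ($\tilde D_0=\mathrm{id}$), and $D_\nu\phi(\tau):=(\tilde D_\nu\phi_0)(\tau,0,0)$. *)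

theory Defs
  imports "HOL-Analysis.Analysis"
begin

definition e :: "complex \<Rightarrow> complex" where
  "e x = exp (2 * complex_of_real pi * \<i> * x)"

definition upper_half :: "complex set" where
  "upper_half = {t. Im t > 0}"

definition gauss_ints :: "complex set" where
  "gauss_ints = {Complex (of_int a) (of_int b) | a b. True}"

definition gauss_units :: "complex set" where
  "gauss_units = {1, -1, \<i>, -\<i>}"

definition gauss_dual :: "complex set" where
  "gauss_dual = {(\<i> / 2) * g | g. g \<in> gauss_ints}"

definition normK :: "complex \<Rightarrow> real" where
  "normK x = Re (x * cnj x)"

definition holo_HC2 :: "(complex \<Rightarrow> complex \<Rightarrow> complex \<Rightarrow> complex) \<Rightarrow> bool" where
  "holo_HC2 f \<longleftrightarrow> (\<forall>t z1 z2. t \<in> upper_half \<longrightarrow>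
     (\<exists>L. ((\<lambda>(a, b, c). f a b c) has_derivative L) (at (t, z1, z2)) \<and>
          (\<forall>w a b c. L (w * a, w * b, w * c) = w * L (a, b, c))))"

definition slash_km ::
  "nat \<Rightarrow> nat \<Rightarrow> complex \<Rightarrow> int \<Rightarrow> int \<Rightarrow> int \<Rightarrow> int \<Rightarrow>
   (complex \<Rightarrow> complex \<Rightarrow> complex \<Rightarrow> complex) \<Rightarrow> (complex \<Rightarrow> complex \<Rightarrow> complex \<Rightarrow> complex)" where
  "slash_km k m \<epsilon> a b c d \<phi> = (\<lambda>t z1 z2.
     inverse (\<epsilon> ^ k) * inverse ((of_int c * t + of_int d) ^ k) *
     e (- of_nat m * of_int c * z1 * z2 / (of_int c * t + of_int d)) *
     \<phi> ((of_int a * t + of_int b) / (of_int c * t + of_int d))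
       (\<epsilon> * z1 / (of_int c * t + of_int d)) (cnj \<epsilon> * z2 / (of_int c * t + of_int d)))"

definition slash_heis ::
  "nat \<Rightarrow> complex \<Rightarrow> complex \<Rightarrow>
   (complex \<Rightarrow> complex \<Rightarrow> complex \<Rightarrow> complex) \<Rightarrow> (complex \<Rightarrow> complex \<Rightarrow> complex \<Rightarrow> complex)" where
  "slash_heis m l u \<phi> = (\<lambda>t z1 z2.
     e (of_nat m * (of_real (normK l) * t + cnj l * z1 + l * z2)) *
     \<phi> t (z1 + l * t + u) (z2 + cnj l * t + cnj u))"

text \<open>Hermitian Jacobi forms J_{k,m}(O_K) (functions on H x C^2; values off H are irrelevant).\<close>
definition jacobi_forms :: "nat \<Rightarrow> nat \<Rightarrow> (complex \<Rightarrow> complex \<Rightarrow> complex \<Rightarrow> complex) set" where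
  "jacobi_forms k m = {\<phi>.
     holo_HC2 \<phi> \<and>
     (\<forall>\<epsilon> \<in> gauss_units. \<forall>a b c d. a * d - b * c = 1 \<longrightarrow>
        (\<forall>t \<in> upper_half. \<forall>z1 z2. slash_km k m \<epsilon> a b c d \<phi> t z1 z2 = \<phi> t z1 z2)) \<and>
     (\<forall>l \<in> gauss_ints. \<forall>u \<in> gauss_ints.
        (\<forall>t \<in> upper_half. \<forall>z1 z2. slash_heis m l u \<phi> t z1 z2 = \<phi> t z1 z2)) \<and>
     (\<exists>cf :: nat \<Rightarrow> complex \<Rightarrow> complex. \<forall>t \<in> upper_half. \<forall>z1 z2.
        ((\<lambda>(n, r). cf n r * e (of_nat n * t + r * z1 + cnj r * z2)) has_sum \<phi> t z1 z2)
          {(n, r). r \<in> gauss_dual \<and> normK r \<le> real (n * m)})}"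

text \<open>Diagonal part phi_0 of the Taylor expansion phi = sum chi_{a,b}(tau) z1^a z2^b.\<close>
definition diag_part :: "(nat \<Rightarrow> nat \<Rightarrow> complex \<Rightarrow> complex) \<Rightarrow> (complex \<Rightarrow> complex \<Rightarrow> complex \<Rightarrow> complex)" where
  "diag_part chi = (\<lambda>t z1 z2. suminf (\<lambda>n. chi n n t * (z1 * z2) ^ n))"

definition pd_tau :: "(complex \<Rightarrow> complex \<Rightarrow> complex \<Rightarrow> complex) \<Rightarrow> (complex \<Rightarrow> complex \<Rightarrow> complex \<Rightarrow> complex)" where
  "pd_tau F = (\<lambda>t z1 z2. deriv (\<lambda>s. F s z1 z2) t)"
definition pd_z1 :: "(complex \<Rightarrow> complex \<Rightarrow> complex \<Rightarrow> complex) \<Rightarrow> (complex \<Rightarrow> complex \<Rightarrow> complex \<Rightarrow> complex)" where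
  "pd_z1 F = (\<lambda>t z1 z2. deriv (\<lambda>s. F t s z2) z1)"
definition pd_z2 :: "(complex \<Rightarrow> complex \<Rightarrow> complex \<Rightarrow> complex) \<Rightarrow> (complex \<Rightarrow> complex \<Rightarrow> complex \<Rightarrow> complex)" where
  "pd_z2 F = (\<lambda>t z1 z2. deriv (\<lambda>s. F t z1 s) z2)"

definition L_op :: "int \<Rightarrow> nat \<Rightarrow> (complex \<Rightarrow> complex \<Rightarrow> complex \<Rightarrow> complex) \<Rightarrow> (complex \<Rightarrow> complex \<Rightarrow> complex \<Rightarrow> complex)" where
  "L_op k m F = (\<lambda>t z1 z2.
     8 * complex_of_real pi * \<i> * of_nat m * pd_tau F t z1 z2
     - (2 * of_int k - 2) / z1 * pd_z2 F t z1 z2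
     - (2 * of_int k - 2) / z2 * pd_z1 F t z1 z2
     - 4 * pd_z1 (pd_z2 F) t z1 z2)"

fun Dtilde :: "nat \<Rightarrow> nat \<Rightarrow> nat \<Rightarrow> (complex \<Rightarrow> complex \<Rightarrow> complex \<Rightarrow> complex) \<Rightarrow> (complex \<Rightarrow> complex \<Rightarrow> complex \<Rightarrow> complex)" where
  "Dtilde k m 0 F = F"
| "Dtilde k m (Suc n) F = L_op (int k + 2 * int n) m (Dtilde k m n F)"

text \<open>D_nu phi(tau) = (tilde D_nu phi_0)(tau,0,0), the value at z1 = z2 = 0 being understood as the
  limit from the region z1 z2 /= 0 where the operator (with its 1/z1, 1/z2 terms) is literally defined.\<close>
definition D_op :: "nat \<Rightarrow> nat \<Rightarrow> nat \<Rightarrow> (nat \<Rightarrow> nat \<Rightarrow> complex \<Rightarrow> complex) \<Rightarrow> complex \<Rightarrow> complex" where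
  "D_op k m \<nu> chi t = Lim (at (0, 0) within {p :: complex \<times> complex. fst p \<noteq> 0 \<and> snd p \<noteq> 0})
      (\<lambda>p. Dtilde k m \<nu> (diag_part chi) t (fst p) (snd p))"

end

theory Submission
  imports Defs
begin

text \<open>
  Write \<open>q = e(\<tau>)\<close> and \<open>w = z\<^sub>1 z\<^sub>2\<close>.  Expanding the exponentials in the Fourier series of a
  Hermitian Jacobi form \<open>\<phi>\<close> shows that its diagonal part is \<open>\<phi>\<^sub>0(\<tau>,z\<^sub>1,z\<^sub>2) = F(e(\<tau>), z\<^sub>1 z\<^sub>2)\<close>
  for a double power series \<open>F(q,w) = \<Sum> \<beta>(n,a) q\<^sup>n w\<^sup>a\<close> that converges absolutely on a
  polydisc, the diagonal coefficients being the columns \<open>\<chi>\<^sub>a\<^sub>,\<^sub>a(\<tau>) = \<Sum>\<^sub>n \<beta>(n,a) e(\<tau>)\<^sup>n\<close>.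
  On such functions \<open>\<partial>\<^sub>\<tau>\<close> multiplies \<open>\<beta>(n,a)\<close> by \<open>2\<pi>i n\<close> and \<open>\<partial>\<^sub>w\<close> shifts the column index, so
  the heat operator \<open>L\<^sub>c\<^sub>,\<^sub>m\<close> becomes an explicit linear recursion on coefficient arrays.
\<close>

lemma e_mult: "e (of_nat n * t) = e t ^ n"
proof -
  have "e (of_nat n * t) = exp (of_nat n * (2 * complex_of_real pi * \<i> * t))"
    by (simp add: e_def algebra_simps)
  also have "\<dots> = e t ^ n" by (simp add: exp_of_nat_mult e_def)
  finally show ?thesis .
qed

lemma e_deriv: "(e has_field_derivative (2 * complex_of_real pi * \<i> * e t)) (at t)"
  unfolding e_def by (auto intro!: derivative_eq_intros)

lemma norm_e: "norm (e t) = exp (- 2 * pi * Im t)"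
  by (simp add: e_def)

text \<open>Regions \<open>|e(s)| < \<rho>\<close> are open, so identities holding there can be differentiated.\<close>
lemma open_e_small: "open {s. norm (e s) < \<rho>}"
  unfolding e_def by (intro open_Collect_less continuous_intros)

lemma norm_e_upper_half: "t \<in> upper_half \<Longrightarrow> norm (e t) < 1"
  by (simp add: norm_e upper_half_def)

lemma e_small_imp_upper_half:
  assumes "norm (e s) < 1"
  shows "s \<in> upper_half"
proof -
  have "exp (- 2 * pi * Im s) < exp 0" using assms by (simp add: norm_e)
  then have "0 < pi * Im s" by simp
  then show ?thesis by (simp add: upper_half_def zero_less_mult_iff)
qed

subsection \<open>Absolutely convergent double power series\<close>

definition dps_conv :: "real \<Rightarrow> real \<Rightarrow> (nat \<Rightarrow> nat \<Rightarrow> complex) \<Rightarrow> bool" where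
  "dps_conv \<rho>0 R0 \<beta> \<longleftrightarrow> (\<forall>\<rho> R. 0 \<le> \<rho> \<longrightarrow> \<rho> < \<rho>0 \<longrightarrow> 0 \<le> R \<longrightarrow> R < R0 \<longrightarrow>
      (\<lambda>(n, a). norm (\<beta> n a) * \<rho> ^ n * R ^ a) summable_on UNIV)"

definition dps_col :: "(nat \<Rightarrow> nat \<Rightarrow> complex) \<Rightarrow> nat \<Rightarrow> complex \<Rightarrow> complex" where
  "dps_col \<beta> a q = (\<Sum>n. \<beta> n a * q ^ n)"

definition dps :: "(nat \<Rightarrow> nat \<Rightarrow> complex) \<Rightarrow> complex \<Rightarrow> complex \<Rightarrow> complex" where
  "dps \<beta> q w = (\<Sum>a. dps_col \<beta> a q * w ^ a)"

lemma dps_convD: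
  "dps_conv \<rho>0 R0 \<beta> \<Longrightarrow> 0 \<le> \<rho> \<Longrightarrow> \<rho> < \<rho>0 \<Longrightarrow> 0 \<le> R \<Longrightarrow> R < R0 \<Longrightarrow>
   (\<lambda>(n, a). norm (\<beta> n a) * \<rho> ^ n * R ^ a) summable_on UNIV"
  unfolding dps_conv_def by blast

lemma dps_conv_compare:
  assumes \<beta>: "dps_conv \<rho>0 R0 \<beta>"
    and cmp: "\<And>\<rho> R. 0 \<le> \<rho> \<Longrightarrow> \<rho> < \<rho>0 \<Longrightarrow> 0 \<le> R \<Longrightarrow> R < R0 \<Longrightarrow>
       \<exists>\<rho>' R' C. 0 \<le> \<rho>' \<and> \<rho>' < \<rho>0 \<and> 0 \<le> R' \<and> R' < R0 \<and>
         (\<forall>n a. norm (\<gamma> n a) * \<rho> ^ n * R ^ a \<le> C * (norm (\<beta> n a) * \<rho>' ^ n * R' ^ a))"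
  shows "dps_conv \<rho>0 R0 \<gamma>"
  unfolding dps_conv_def
proof (intro allI impI)
  fix \<rho> R :: real assume h: "0 \<le> \<rho>" "\<rho> < \<rho>0" "0 \<le> R" "R < R0"
  obtain \<rho>' R' C where h': "0 \<le> \<rho>'" "\<rho>' < \<rho>0" "0 \<le> R'" "R' < R0"
    and le: "\<And>n a. norm (\<gamma> n a) * \<rho> ^ n * R ^ a \<le> C * (norm (\<beta> n a) * \<rho>' ^ n * R' ^ a)"
    using cmp[OF h] by blast
  have "(\<lambda>x. C * (case x of (n, a) \<Rightarrow> norm (\<beta> n a) * \<rho>' ^ n * R' ^ a)) summable_on UNIV"
    by (intro summable_on_cmult_right dps_convD[OF \<beta> h'])
  then show "(\<lambda>(n, a). norm (\<gamma> n a) * \<rho> ^ n * R ^ a) summable_on UNIV"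
    by (rule summable_on_comparison_test) (use le h in \<open>auto split: prod.splits\<close>)
qed

text \<open>A linear factor is absorbed by enlarging the radius: \<open>n x\<^sup>n \<le> C y\<^sup>n\<close> for \<open>0 \<le> x < y\<close>.\<close>
lemma linear_times_power_bound:
  fixes x y :: real
  assumes "0 \<le> x" "x < y"
  shows "\<exists>C. \<forall>n. real n * x ^ n \<le> C * y ^ n"
proof -
  have y: "y > 0" using assms by simp
  have "(\<lambda>n. real n * (x / y) ^ n) \<longlonglongrightarrow> 0"
    using assms by (intro powser_times_n_limit_0) simp
  then have "Bseq (\<lambda>n. real n * (x / y) ^ n)" by (intro convergent_imp_Bseq convergentI)
  then obtain C where C: "\<And>n. norm (real n * (x / y) ^ n) \<le> C" by (auto simp: Bseq_def)
  have "real n * x ^ n \<le> C * y ^ n" for n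
  proof -
    have "real n * (x / y) ^ n * y ^ n \<le> C * y ^ n"
      using C[of n] y by (intro mult_right_mono) auto
    then show ?thesis using y by (simp add: power_divide)
  qed
  then show ?thesis by blast
qed

lemma dps_conv_cmult:
  assumes "dps_conv \<rho>0 R0 \<beta>"
  shows "dps_conv \<rho>0 R0 (\<lambda>n a. c * \<beta> n a)"
  by (rule dps_conv_compare[OF assms]) (auto simp: norm_mult mult_ac)

lemma dps_conv_add:
  assumes \<beta>: "dps_conv \<rho>0 R0 \<beta>" and \<gamma>: "dps_conv \<rho>0 R0 \<gamma>"
  shows "dps_conv \<rho>0 R0 (\<lambda>n a. \<beta> n a + \<gamma> n a)"
  unfolding dps_conv_def
proof (intro allI impI)
  fix \<rho> R :: real assume h: "0 \<le> \<rho>" "\<rho> < \<rho>0" "0 \<le> R" "R < R0"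
  have S: "(\<lambda>x. (case x of (n, a) \<Rightarrow> norm (\<beta> n a) * \<rho> ^ n * R ^ a)
          + (case x of (n, a) \<Rightarrow> norm (\<gamma> n a) * \<rho> ^ n * R ^ a)) summable_on UNIV"
    by (intro summable_on_add dps_convD[OF \<beta> h] dps_convD[OF \<gamma> h])
  have le: "norm (\<beta> n a + \<gamma> n a) * \<rho> ^ n * R ^ a
      \<le> norm (\<beta> n a) * \<rho> ^ n * R ^ a + norm (\<gamma> n a) * \<rho> ^ n * R ^ a" for n a
    using mult_right_mono[OF norm_triangle_ineq[of "\<beta> n a" "\<gamma> n a"], of "\<rho> ^ n * R ^ a"] h
    by (simp add: algebra_simps)
  show "(\<lambda>(n, a). norm (\<beta> n a + \<gamma> n a) * \<rho> ^ n * R ^ a) summable_on UNIV"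
    by (intro summable_on_comparison_test[OF S]) (use le h in \<open>auto split: prod.splits\<close>)
qed

lemma dps_conv_mult_n:
  assumes "dps_conv \<rho>0 R0 \<beta>"
  shows "dps_conv \<rho>0 R0 (\<lambda>n a. of_nat n * \<beta> n a)"
proof (rule dps_conv_compare[OF assms])
  fix \<rho> R :: real assume h: "0 \<le> \<rho>" "\<rho> < \<rho>0" "0 \<le> R" "R < R0"
  define \<rho>' where "\<rho>' = (\<rho> + \<rho>0) / 2"
  have h': "0 \<le> \<rho>'" "\<rho>' < \<rho>0" "\<rho> < \<rho>'" using h by (auto simp: \<rho>'_def)
  obtain C where C: "\<And>n. real n * \<rho> ^ n \<le> C * \<rho>' ^ n"
    using linear_times_power_bound[OF h(1) h'(3)] by blast
  have "norm (of_nat n * \<beta> n a) * \<rho> ^ n * R ^ a \<le> C * (norm (\<beta> n a) * \<rho>' ^ n * R ^ a)" for n a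
    using mult_left_mono[OF C[of n], of "norm (\<beta> n a) * R ^ a"] h by (simp add: norm_mult mult_ac)
  then show "\<exists>\<rho>' R' C. 0 \<le> \<rho>' \<and> \<rho>' < \<rho>0 \<and> 0 \<le> R' \<and> R' < R0 \<and>
      (\<forall>n a. norm (of_nat n * \<beta> n a) * \<rho> ^ n * R ^ a \<le> C * (norm (\<beta> n a) * \<rho>' ^ n * R' ^ a))"
    using h h' by blast
qed

lemma dps_conv_mult_a:
  assumes "dps_conv \<rho>0 R0 \<beta>"
  shows "dps_conv \<rho>0 R0 (\<lambda>n a. of_nat a * \<beta> n a)"
proof (rule dps_conv_compare[OF assms])
  fix \<rho> R :: real assume h: "0 \<le> \<rho>" "\<rho> < \<rho>0" "0 \<le> R" "R < R0"
  define R' where "R' = (R + R0) / 2"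
  have h': "0 \<le> R'" "R' < R0" "R < R'" using h by (auto simp: R'_def)
  obtain C where C: "\<And>a. real a * R ^ a \<le> C * R' ^ a"
    using linear_times_power_bound[OF h(3) h'(3)] by blast
  have "norm (of_nat a * \<beta> n a) * \<rho> ^ n * R ^ a \<le> C * (norm (\<beta> n a) * \<rho> ^ n * R' ^ a)" for n a
    using mult_left_mono[OF C[of a], of "norm (\<beta> n a) * \<rho> ^ n"] h by (simp add: norm_mult mult_ac)
  then show "\<exists>\<rho>' R' C. 0 \<le> \<rho>' \<and> \<rho>' < \<rho>0 \<and> 0 \<le> R' \<and> R' < R0 \<and>
      (\<forall>n a. norm (of_nat a * \<beta> n a) * \<rho> ^ n * R ^ a \<le> C * (norm (\<beta> n a) * \<rho>' ^ n * R' ^ a))"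
    using h h' by blast
qed

text \<open>Shifting the column index costs one factor \<open>1/R\<close> on a slightly larger polydisc.\<close>
lemma dps_conv_shift:
  assumes "dps_conv \<rho>0 R0 \<beta>"
  shows "dps_conv \<rho>0 R0 (\<lambda>n a. \<beta> n (Suc a))"
  unfolding dps_conv_def
proof (intro allI impI)
  fix \<rho> R :: real assume h: "0 \<le> \<rho>" "\<rho> < \<rho>0" "0 \<le> R" "R < R0"
  define R' where "R' = (R + R0) / 2"
  have h': "0 < R'" "R' < R0" "R \<le> R'" using h by (auto simp: R'_def)
  define g where "g = (\<lambda>(n, a). norm (\<beta> n a) * \<rho> ^ n * R' ^ a)"
  have "g summable_on UNIV" unfolding g_def using h' h by (intro dps_convD[OF assms]) auto
  then have "g summable_on range (\<lambda>(n, a). (n, Suc a))" by (rule summable_on_subset) auto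
  then have "(g \<circ> (\<lambda>(n, a). (n, Suc a))) summable_on UNIV"
    by (subst (asm) summable_on_reindex) (auto simp: inj_on_def)
  then have S: "(\<lambda>x. (1 / R') * (g \<circ> (\<lambda>(n, a). (n, Suc a))) x) summable_on UNIV"
    by (rule summable_on_cmult_right)
  have le: "norm (\<beta> n (Suc a)) * \<rho> ^ n * R ^ a \<le> (1 / R') * (norm (\<beta> n (Suc a)) * \<rho> ^ n * R' ^ Suc a)"
    for n a
  proof -
    have "R ^ a \<le> R' ^ a" using h h' by (intro power_mono) auto
    then have "norm (\<beta> n (Suc a)) * \<rho> ^ n * R ^ a \<le> norm (\<beta> n (Suc a)) * \<rho> ^ n * R' ^ a"
      using h by (intro mult_left_mono) auto
    then show ?thesis using h' by (simp add: mult.assoc)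
  qed
  show "(\<lambda>(n, a). norm (\<beta> n (Suc a)) * \<rho> ^ n * R ^ a) summable_on UNIV"
    by (intro summable_on_comparison_test[OF S]) (use le h in \<open>auto simp: g_def split: prod.splits\<close>)
qed

lemma infsum_nat_eq_suminf:
  fixes f :: "nat \<Rightarrow> complex"
  assumes "f summable_on UNIV"
  shows "summable f" and "infsum f UNIV = suminf f"
proof -
  have "f sums infsum f UNIV" using assms by (intro has_sum_imp_sums has_sum_infsum)
  then show "summable f" "infsum f UNIV = suminf f" by (simp_all add: sums_summable sums_unique)
qed

lemma nat_pair_fubini:
  fixes f :: "nat \<Rightarrow> nat \<Rightarrow> complex"
  assumes S: "(\<lambda>(n, a). f n a) summable_on UNIV"
  shows "((\<lambda>(n, a). f n a) has_sum (\<Sum>n. \<Sum>a. f n a)) UNIV"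
    and "(\<Sum>n. \<Sum>a. f n a) = (\<Sum>a. \<Sum>n. f n a)"
    and "summable (\<lambda>n. \<Sum>a. f n a)" and "summable (\<lambda>a. \<Sum>n. f n a)"
    and "summable (f n)" and "summable (\<lambda>n. f n a)"
proof -
  have S1: "(\<lambda>(n, a). f n a) summable_on Sigma UNIV (\<lambda>_. UNIV)" using S by simp
  have S2: "(\<lambda>(a, n). f n a) summable_on Sigma UNIV (\<lambda>_. UNIV)"
    using S summable_on_swap[of "\<lambda>(n, a). f n a" UNIV UNIV] by (simp add: case_prod_unfold)
  have row: "f n summable_on UNIV" for n using summable_on_SigmaD1[OF S1] by simp
  have col: "(\<lambda>n. f n a) summable_on UNIV" for a using summable_on_SigmaD1[OF S2] by simp
  have rows: "(\<lambda>n. infsum (f n) UNIV) = (\<lambda>n. \<Sum>a. f n a)"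
    using infsum_nat_eq_suminf(2)[OF row] by simp
  have cols: "(\<lambda>a. infsum (\<lambda>n. f n a) UNIV) = (\<lambda>a. \<Sum>n. f n a)"
    using infsum_nat_eq_suminf(2)[OF col] by simp
  have o1: "(\<lambda>n. \<Sum>a. f n a) summable_on UNIV"
    using summable_on_Sigma_banach[OF S1] by (simp add: rows)
  have o2: "(\<lambda>a. \<Sum>n. f n a) summable_on UNIV"
    using summable_on_Sigma_banach[OF S2] by (simp add: cols)
  have e1: "infsum (\<lambda>n. \<Sum>a. f n a) UNIV = infsum (\<lambda>(n, a). f n a) UNIV"
    using infsum_Sigma'_banach[OF S1] by (simp add: rows)
  have e2: "infsum (\<lambda>a. \<Sum>n. f n a) UNIV = infsum (\<lambda>(n, a). f n a) UNIV"
    using infsum_swap_banach[of "\<lambda>n a. f n a" UNIV UNIV] S1 infsum_Sigma'_banach[OF S1]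
    by (simp add: rows cols)
  show "summable (f n)" using infsum_nat_eq_suminf(1)[OF row] .
  show "summable (\<lambda>n. f n a)" using infsum_nat_eq_suminf(1)[OF col] .
  show "summable (\<lambda>n. \<Sum>a. f n a)" using infsum_nat_eq_suminf(1)[OF o1] .
  show "summable (\<lambda>a. \<Sum>n. f n a)" using infsum_nat_eq_suminf(1)[OF o2] .
  show "(\<Sum>n. \<Sum>a. f n a) = (\<Sum>a. \<Sum>n. f n a)"
    using e1 e2 infsum_nat_eq_suminf(2)[OF o1] infsum_nat_eq_suminf(2)[OF o2] by simp
  show "((\<lambda>(n, a). f n a) has_sum (\<Sum>n. \<Sum>a. f n a)) UNIV"
    using has_sum_infsum[OF S] e1 infsum_nat_eq_suminf(2)[OF o1] by simp
qed

lemma dps_abs_summable: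
  assumes "dps_conv \<rho>0 R0 \<beta>" "norm q < \<rho>0" "norm w < R0"
  shows "(\<lambda>(n, a). \<beta> n a * q ^ n * w ^ a) summable_on UNIV"
proof -
  have "(\<lambda>(n, a). norm (\<beta> n a) * norm q ^ n * norm w ^ a) summable_on UNIV"
    using assms by (intro dps_convD) auto
  then have "(\<lambda>x. norm ((\<lambda>(n, a). \<beta> n a * q ^ n * w ^ a) x)) summable_on UNIV"
    by (rule summable_on_cong[THEN iffD1, rotated]) (auto simp: norm_mult norm_power)
  then show ?thesis by (simp add: summable_on_iff_abs_summable_on_complex)
qed

text \<open>Each column and each row of a convergent double power series converges; a nonzero
  auxiliary value of the other variable is divided out.\<close>
lemma dps_col_summable:
  assumes "dps_conv \<rho>0 R0 \<beta>" "0 < R0" "norm q < \<rho>0"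
  shows "summable (\<lambda>n. \<beta> n a * q ^ n)"
proof -
  define w :: complex where "w = of_real (R0 / 2)"
  have w: "norm w < R0" "w \<noteq> 0" using assms(2) by (auto simp: w_def)
  have "summable (\<lambda>n. \<beta> n a * q ^ n * w ^ a)"
    using nat_pair_fubini(6)[OF dps_abs_summable[OF assms(1,3) w(1)]] by simp
  then have "summable (\<lambda>n. (\<beta> n a * q ^ n * w ^ a) * inverse (w ^ a))" by (rule summable_mult2)
  then show ?thesis using w(2) by (simp add: field_simps)
qed

lemma dps_row_summable:
  assumes "dps_conv \<rho>0 R0 \<beta>" "0 < \<rho>0" "norm w < R0"
  shows "summable (\<lambda>a. \<beta> n a * w ^ a)"
proof -
  define q :: complex where "q = of_real (\<rho>0 / 2)"
  have q: "norm q < \<rho>0" "q \<noteq> 0" using assms(2) by (auto simp: q_def)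
  have "summable (\<lambda>a. \<beta> n a * q ^ n * w ^ a)"
    using nat_pair_fubini(5)[OF dps_abs_summable[OF assms(1) q(1) assms(3)]] by simp
  then have "summable (\<lambda>a. (\<beta> n a * q ^ n * w ^ a) * inverse (q ^ n))" by (rule summable_mult2)
  then show ?thesis using q(2) by (simp add: field_simps)
qed

lemma dps_expansions:
  fixes q w :: complex
  assumes g: "dps_conv \<rho>0 R0 \<beta>" and q: "norm q < \<rho>0" and w: "norm w < R0"
  shows "((\<lambda>(n, a). \<beta> n a * q ^ n * w ^ a) has_sum dps \<beta> q w) UNIV"
    and "summable (\<lambda>a. dps_col \<beta> a q * w ^ a)"
    and "dps \<beta> q w = (\<Sum>n. (\<Sum>a. \<beta> n a * w ^ a) * q ^ n)"
    and "summable (\<lambda>n. (\<Sum>a. \<beta> n a * w ^ a) * q ^ n)"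
proof -
  have pos: "0 < \<rho>0" "0 < R0" using q w norm_ge_zero[of q] norm_ge_zero[of w] by linarith+
  note F = nat_pair_fubini[OF dps_abs_summable[OF g q w]]
  have cols: "(\<Sum>n. \<beta> n a * q ^ n * w ^ a) = dps_col \<beta> a q * w ^ a" for a
    using suminf_mult2[OF dps_col_summable[OF g pos(2) q, of a], of "w ^ a"] by (simp add: dps_col_def)
  have rows: "(\<Sum>a. \<beta> n a * q ^ n * w ^ a) = (\<Sum>a. \<beta> n a * w ^ a) * q ^ n" for n
    using suminf_mult2[OF dps_row_summable[OF g pos(1) w, of n], of "q ^ n"] by (simp add: mult_ac)
  show "((\<lambda>(n, a). \<beta> n a * q ^ n * w ^ a) has_sum dps \<beta> q w) UNIV"
    using F(1) F(2) by (simp add: cols dps_def)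
  show "summable (\<lambda>a. dps_col \<beta> a q * w ^ a)" using F(4) by (simp add: cols)
  show "dps \<beta> q w = (\<Sum>n. (\<Sum>a. \<beta> n a * w ^ a) * q ^ n)" using F(2) by (simp add: cols rows dps_def)
  show "summable (\<lambda>n. (\<Sum>a. \<beta> n a * w ^ a) * q ^ n)" using F(3) by (simp add: rows)
qed

subsection \<open>Termwise differentiation\<close>

lemma qseries_deriv:
  assumes sm: "\<And>q. norm q < \<rho>0 \<Longrightarrow> summable (\<lambda>n. c n * q ^ n)" and t: "norm (e t) < \<rho>0"
  shows "((\<lambda>s. \<Sum>n. c n * e s ^ n) has_field_derivative
           (\<Sum>n. (2 * complex_of_real pi * \<i> * of_nat n) * c n * e t ^ n)) (at t)"
proof -
  define q where "q = e t"
  have D1: "((\<lambda>x. \<Sum>n. c n * x ^ n) has_field_derivative (\<Sum>n. diffs c n * q ^ n)) (at q)"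
    using termdiffs_strong'[of \<rho>0 c q] sm t by (simp add: q_def)
  have D: "((\<lambda>s. \<Sum>n. c n * e s ^ n) has_field_derivative
      (\<Sum>n. diffs c n * q ^ n) * (2 * complex_of_real pi * \<i> * e t)) (at t)"
    using DERIV_chain2[OF D1[unfolded q_def] e_deriv] by (simp add: q_def)
  have sd: "summable (\<lambda>n. diffs c n * q ^ n)" using termdiff_converges[of q \<rho>0 c] sm t by (simp add: q_def)
  define f where "f = (\<lambda>n. of_nat n * c n * q ^ n)"
  have fS: "f (Suc n) = q * (diffs c n * q ^ n)" for n by (simp add: f_def diffs_def algebra_simps)
  have sf: "summable f" using summable_mult[OF sd, of q] by (simp flip: fS add: summable_Suc_iff)
  have "(\<Sum>n. f n) = q * (\<Sum>n. diffs c n * q ^ n)"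
    using suminf_split_head[OF sf] suminf_mult[OF sd, of q] by (simp add: f_def flip: fS)
  then have "(\<Sum>n. diffs c n * q ^ n) * (2 * complex_of_real pi * \<i> * e t)
      = (2 * complex_of_real pi * \<i>) * (\<Sum>n. f n)" by (simp add: q_def algebra_simps)
  also have "\<dots> = (\<Sum>n. (2 * complex_of_real pi * \<i> * of_nat n) * c n * e t ^ n)"
    using suminf_mult[OF sf, of "2 * complex_of_real pi * \<i>"] by (simp add: f_def q_def algebra_simps)
  finally show ?thesis using D by simp
qed

definition coeff_dtau :: "(nat \<Rightarrow> nat \<Rightarrow> complex) \<Rightarrow> nat \<Rightarrow> nat \<Rightarrow> complex" where
  "coeff_dtau \<beta> n a = 2 * complex_of_real pi * \<i> * of_nat n * \<beta> n a"

definition coeff_dw :: "(nat \<Rightarrow> nat \<Rightarrow> complex) \<Rightarrow> nat \<Rightarrow> nat \<Rightarrow> complex" where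
  "coeff_dw \<beta> n a = of_nat (Suc a) * \<beta> n (Suc a)"

lemma dps_conv_dtau: "dps_conv \<rho>0 R0 \<beta> \<Longrightarrow> dps_conv \<rho>0 R0 (coeff_dtau \<beta>)"
  using dps_conv_cmult[OF dps_conv_mult_n, of \<rho>0 R0 \<beta> "2 * complex_of_real pi * \<i>"]
  by (simp add: coeff_dtau_def[abs_def] mult.assoc)

lemma dps_conv_dw:
  assumes "dps_conv \<rho>0 R0 \<beta>"
  shows "dps_conv \<rho>0 R0 (coeff_dw \<beta>)"
proof -
  have "dps_conv \<rho>0 R0 (\<lambda>n a. of_nat a * \<beta> n (Suc a) + \<beta> n (Suc a))"
    by (intro dps_conv_add dps_conv_mult_a dps_conv_shift assms)
  then show ?thesis by (simp add: coeff_dw_def[abs_def] algebra_simps)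
qed

lemma dps_col_deriv:
  assumes "dps_conv \<rho>0 R0 \<beta>" "0 < R0" "norm (e t) < \<rho>0"
  shows "((\<lambda>s. dps_col \<beta> a (e s)) has_field_derivative dps_col (coeff_dtau \<beta>) a (e t)) (at t)"
  using qseries_deriv[of \<rho>0 "\<lambda>n. \<beta> n a" t] dps_col_summable[OF assms(1,2)] assms(3)
  by (simp add: dps_col_def coeff_dtau_def)

lemma dps_deriv_q:
  assumes g: "dps_conv \<rho>0 R0 \<beta>" and t: "norm (e t) < \<rho>0" and w: "norm w < R0"
  shows "((\<lambda>s. dps \<beta> (e s) w) has_field_derivative dps (coeff_dtau \<beta>) (e t) w) (at t)"
proof -
  have \<rho>0: "0 < \<rho>0" using t norm_ge_zero[of "e t"] by linarith
  define c where "c = (\<lambda>n. \<Sum>a. \<beta> n a * w ^ a)"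
  have D: "((\<lambda>s. \<Sum>n. c n * e s ^ n) has_field_derivative
           (\<Sum>n. (2 * complex_of_real pi * \<i> * of_nat n) * c n * e t ^ n)) (at t)"
    using dps_expansions(4)[OF g _ w] by (intro qseries_deriv[OF _ t]) (simp add: c_def mult.commute)
  have "((\<lambda>s. dps \<beta> (e s) w) has_field_derivative
           (\<Sum>n. (2 * complex_of_real pi * \<i> * of_nat n) * c n * e t ^ n)) (at t)"
    by (rule has_field_derivative_transform_within_open[OF D open_e_small])
      (use t dps_expansions(3)[OF g _ w] in \<open>auto simp: c_def mult.commute\<close>)
  moreover have "(\<Sum>a. coeff_dtau \<beta> n a * w ^ a) = (2 * complex_of_real pi * \<i> * of_nat n) * c n" for n
    using suminf_mult[OF dps_row_summable[OF g \<rho>0 w, of n], of "2 * complex_of_real pi * \<i> * of_nat n"]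
    by (simp add: c_def coeff_dtau_def algebra_simps)
  then have "dps (coeff_dtau \<beta>) (e t) w = (\<Sum>n. (2 * complex_of_real pi * \<i> * of_nat n) * c n * e t ^ n)"
    using dps_expansions(3)[OF dps_conv_dtau[OF g] t w] by simp
  ultimately show ?thesis by simp
qed

lemma dps_deriv_w:
  assumes g: "dps_conv \<rho>0 R0 \<beta>" and q: "norm q < \<rho>0" and w: "norm w < R0"
  shows "((\<lambda>w. dps \<beta> q w) has_field_derivative dps (coeff_dw \<beta>) q w) (at w)"
proof -
  have R0: "0 < R0" using w norm_ge_zero[of w] by linarith
  have D: "((\<lambda>z. \<Sum>a. dps_col \<beta> a q * z ^ a) has_field_derivative
      (\<Sum>a. diffs (\<lambda>a. dps_col \<beta> a q) a * w ^ a)) (at w)"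
    by (rule termdiffs_strong'[OF dps_expansions(2)[OF g q] w])
  have "diffs (\<lambda>a. dps_col \<beta> a q) a = dps_col (coeff_dw \<beta>) a q" for a
    using suminf_mult[OF dps_col_summable[OF g R0 q, of "Suc a"], of "of_nat (Suc a)"]
    by (simp add: diffs_def dps_col_def coeff_dw_def algebra_simps)
  then show ?thesis using D by (simp add: dps_def[abs_def])
qed

lemma dps_linear:
  assumes g1: "dps_conv \<rho>0 R0 \<beta>1" and g2: "dps_conv \<rho>0 R0 \<beta>2"
    and q: "norm q < \<rho>0" and w: "norm w < R0"
  shows "dps (\<lambda>n a. x * \<beta>1 n a + y * \<beta>2 n a) q w = x * dps \<beta>1 q w + y * dps \<beta>2 q w"
proof -
  have g: "dps_conv \<rho>0 R0 (\<lambda>n a. x * \<beta>1 n a + y * \<beta>2 n a)"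
    by (intro dps_conv_add dps_conv_cmult g1 g2)
  have "((\<lambda>(n, a). (x * \<beta>1 n a + y * \<beta>2 n a) * q ^ n * w ^ a)
      has_sum (x * dps \<beta>1 q w + y * dps \<beta>2 q w)) UNIV"
    using has_sum_add[OF has_sum_cmult_right[OF dps_expansions(1)[OF g1 q w], of x]
        has_sum_cmult_right[OF dps_expansions(1)[OF g2 q w], of y]]
    by (simp add: case_prod_unfold algebra_simps)
  then show ?thesis using dps_expansions(1)[OF g q w] has_sum_unique by blast
qed

lemma dps_mult_a:
  assumes g: "dps_conv \<rho>0 R0 \<delta>" and q: "norm q < \<rho>0" and w: "norm w < R0"
  shows "dps (\<lambda>n a. of_nat a * \<delta> n a) q w = w * dps (coeff_dw \<delta>) q w"
proof -
  have R0: "0 < R0" using w norm_ge_zero[of w] by linarith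
  have col: "dps_col (\<lambda>n a. c a * \<delta> n a) a q = c a * dps_col \<delta> a q" for c a
    using suminf_mult[OF dps_col_summable[OF g R0 q, of a], of "c a"]
    by (simp add: dps_col_def algebra_simps)
  define f where "f = (\<lambda>a. of_nat a * dps_col \<delta> a q * w ^ a)"
  have sf: "summable f"
    using dps_expansions(2)[OF dps_conv_mult_a[OF g] q w] col[of of_nat] by (simp add: f_def)
  have "dps_col (coeff_dw \<delta>) a q = of_nat (Suc a) * dps_col \<delta> (Suc a) q" for a
    using suminf_mult[OF dps_col_summable[OF g R0 q, of "Suc a"], of "of_nat (Suc a)"]
    by (simp add: dps_col_def coeff_dw_def algebra_simps)
  then have fS: "f (Suc a) = w * (dps_col (coeff_dw \<delta>) a q * w ^ a)" for a
    by (simp add: f_def algebra_simps)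
  have "dps (\<lambda>n a. of_nat a * \<delta> n a) q w = (\<Sum>a. f a)" by (simp add: dps_def f_def col)
  also have "\<dots> = (\<Sum>a. f (Suc a))" using suminf_split_head[OF sf] by (simp add: f_def)
  also have "\<dots> = w * dps (coeff_dw \<delta>) q w"
    unfolding fS dps_def by (rule suminf_mult[OF dps_expansions(2)[OF dps_conv_dw[OF g] q w]])
  finally show ?thesis .
qed

text \<open>The coefficient array of \<open>L\<^sub>c\<^sub>,\<^sub>m\<close> applied to a function of \<open>(e(\<tau>), z\<^sub>1 z\<^sub>2)\<close>, where
  \<open>A = 8\<pi>i m\<close>: the terms \<open>(2c-2)(z\<^sub>1\<^sup>-\<^sup>1\<partial>\<^sub>z\<^sub>2 + z\<^sub>2\<^sup>-\<^sup>1\<partial>\<^sub>z\<^sub>1) + 4\<partial>\<^sub>z\<^sub>1\<partial>\<^sub>z\<^sub>2\<close> become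
  \<open>4(c \<partial>\<^sub>w + w \<partial>\<^sub>w\<^sup>2)\<close>, which lowers the column index.\<close>
definition coeff_L :: "complex \<Rightarrow> int \<Rightarrow> (nat \<Rightarrow> nat \<Rightarrow> complex) \<Rightarrow> nat \<Rightarrow> nat \<Rightarrow> complex" where
  "coeff_L A c \<beta> n a = A * coeff_dtau \<beta> n a - 4 * of_nat (Suc a) * (of_nat a + of_int c) * \<beta> n (Suc a)"

lemma coeff_L_decompose:
  "coeff_L A c \<beta> = (\<lambda>n a. A * coeff_dtau \<beta> n a + (- 4 * of_int c) * coeff_dw \<beta> n a
      + (-4) * (of_nat a * coeff_dw \<beta> n a))"
  by (auto simp: fun_eq_iff coeff_L_def coeff_dw_def algebra_simps)

lemma dps_conv_coeff_L: "dps_conv \<rho>0 R0 \<beta> \<Longrightarrow> dps_conv \<rho>0 R0 (coeff_L A c \<beta>)"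
  unfolding coeff_L_decompose
  by (intro dps_conv_add dps_conv_cmult dps_conv_dtau dps_conv_dw dps_conv_mult_a)

lemma dps_coeff_L:
  assumes g: "dps_conv \<rho>0 R0 \<beta>" and q: "norm q < \<rho>0" and w: "norm w < R0"
  shows "dps (coeff_L A c \<beta>) q w
    = A * dps (coeff_dtau \<beta>) q w - 4 * of_int c * dps (coeff_dw \<beta>) q w - 4 * w * dps (coeff_dw (coeff_dw \<beta>)) q w"
proof -
  have gs: "dps_conv \<rho>0 R0 (\<lambda>n a. A * coeff_dtau \<beta> n a + (- 4 * of_int c) * coeff_dw \<beta> n a)"
    by (intro dps_conv_add dps_conv_cmult dps_conv_dtau dps_conv_dw g)
  have "dps (coeff_L A c \<beta>) q w = dps (\<lambda>n a. 1 * (A * coeff_dtau \<beta> n a + (- 4 * of_int c) * coeff_dw \<beta> n a)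
      + (-4) * (of_nat a * coeff_dw \<beta> n a)) q w"
    unfolding coeff_L_decompose by simp
  also have "\<dots> = dps (\<lambda>n a. A * coeff_dtau \<beta> n a + (- 4 * of_int c) * coeff_dw \<beta> n a) q w
      + (-4) * dps (\<lambda>n a. of_nat a * coeff_dw \<beta> n a) q w"
    using dps_linear[OF gs dps_conv_mult_a[OF dps_conv_dw[OF g]] q w, of 1 "-4"] by simp
  also have "dps (\<lambda>n a. A * coeff_dtau \<beta> n a + (- 4 * of_int c) * coeff_dw \<beta> n a) q w
      = A * dps (coeff_dtau \<beta>) q w + (- 4 * of_int c) * dps (coeff_dw \<beta>) q w"
    by (rule dps_linear[OF dps_conv_dtau[OF g] dps_conv_dw[OF g] q w])
  also have "dps (\<lambda>n a. of_nat a * coeff_dw \<beta> n a) q w = w * dps (coeff_dw (coeff_dw \<beta>)) q w"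
    by (rule dps_mult_a[OF dps_conv_dw[OF g] q w])
  finally show ?thesis by (simp add: algebra_simps)
qed

subsection \<open>The heat operator on functions of \<open>e(\<tau>)\<close> and \<open>z\<^sub>1 z\<^sub>2\<close>\<close>

text \<open>Points where the double series converges and where \<open>L\<^sub>c\<^sub>,\<^sub>m\<close>, with its \<open>1/z\<^sub>1\<close> and \<open>1/z\<^sub>2\<close>
  terms, is literally defined.\<close>
definition dps_adm :: "real \<Rightarrow> real \<Rightarrow> complex \<Rightarrow> complex \<Rightarrow> complex \<Rightarrow> bool" where
  "dps_adm \<rho>0 R0 s z1 z2 \<longleftrightarrow> norm (e s) < \<rho>0 \<and> z1 \<noteq> 0 \<and> z2 \<noteq> 0 \<and> norm (z1 * z2) < R0"

definition dps_rep :: "real \<Rightarrow> real \<Rightarrow> (nat \<Rightarrow> nat \<Rightarrow> complex) \<Rightarrow>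
    (complex \<Rightarrow> complex \<Rightarrow> complex \<Rightarrow> complex) \<Rightarrow> bool" where
  "dps_rep \<rho>0 R0 \<beta> G \<longleftrightarrow> (\<forall>s z1 z2. dps_adm \<rho>0 R0 s z1 z2 \<longrightarrow> G s z1 z2 = dps \<beta> (e s) (z1 * z2))"

text \<open>Admissibility is an open condition, so it persists when one variable is moved.\<close>
lemma dps_adm_eventually:
  assumes a: "dps_adm \<rho>0 R0 t z1 z2"
  shows "eventually (\<lambda>s. dps_adm \<rho>0 R0 s z1 z2) (nhds t)"
    and "eventually (\<lambda>x. dps_adm \<rho>0 R0 t x z2) (nhds z1)"
    and "eventually (\<lambda>x. dps_adm \<rho>0 R0 t z1 x) (nhds z2)"
proof -
  have "open {(s, x1, x2). dps_adm \<rho>0 R0 s x1 x2}"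
    unfolding dps_adm_def e_def case_prod_unfold
    by (intro open_Collect_conj open_Collect_neq open_Collect_less continuous_intros)
  then have J: "eventually (\<lambda>(s, x1, x2). dps_adm \<rho>0 R0 s x1 x2) (nhds (t, z1, z2))"
    using eventually_nhds_in_open a by fastforce
  have "((\<lambda>s. (s, z1, z2)) \<longlongrightarrow> (t, z1, z2)) (nhds t)"
    and "((\<lambda>x. (t, x, z2)) \<longlongrightarrow> (t, z1, z2)) (nhds z1)"
    and "((\<lambda>x. (t, z1, x)) \<longlongrightarrow> (t, z1, z2)) (nhds z2)"
    by (auto intro!: tendsto_intros filterlim_ident)
  from this[THEN eventually_compose_filterlim[OF J]]
  show "eventually (\<lambda>s. dps_adm \<rho>0 R0 s z1 z2) (nhds t)"
    and "eventually (\<lambda>x. dps_adm \<rho>0 R0 t x z2) (nhds z1)"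
    and "eventually (\<lambda>x. dps_adm \<rho>0 R0 t z1 x) (nhds z2)"
    by simp_all
qed

text \<open>The partial derivatives of a represented function are represented by the termwise
  derivatives; the chain rule for \<open>w = z\<^sub>1 z\<^sub>2\<close> produces the factors \<open>z\<^sub>1\<close>, \<open>z\<^sub>2\<close>.\<close>
lemma pd_tau_dps_rep:
  assumes g: "dps_conv \<rho>0 R0 \<beta>" and G: "dps_rep \<rho>0 R0 \<beta> G" and a: "dps_adm \<rho>0 R0 t z1 z2"
  shows "pd_tau G t z1 z2 = dps (coeff_dtau \<beta>) (e t) (z1 * z2)"
proof -
  have ev: "eventually (\<lambda>s. G s z1 z2 = dps \<beta> (e s) (z1 * z2)) (nhds t)"
    using dps_adm_eventually(1)[OF a] G by (auto simp: dps_rep_def elim!: eventually_mono)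
  show ?thesis
    using deriv_cong_ev[OF ev refl] DERIV_imp_deriv[OF dps_deriv_q[OF g]] a
    by (simp add: pd_tau_def dps_adm_def)
qed

lemma pd_z2_dps_rep:
  assumes g: "dps_conv \<rho>0 R0 \<beta>" and G: "dps_rep \<rho>0 R0 \<beta> G" and a: "dps_adm \<rho>0 R0 t z1 z2"
  shows "pd_z2 G t z1 z2 = z1 * dps (coeff_dw \<beta>) (e t) (z1 * z2)"
proof -
  have ev: "eventually (\<lambda>x. G t z1 x = dps \<beta> (e t) (z1 * x)) (nhds z2)"
    using dps_adm_eventually(3)[OF a] G by (auto simp: dps_rep_def elim!: eventually_mono)
  have "((\<lambda>x. dps \<beta> (e t) (z1 * x)) has_field_derivative dps (coeff_dw \<beta>) (e t) (z1 * z2) * z1) (at z2)"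
    using a unfolding dps_adm_def
    by (intro DERIV_chain2[where f="dps \<beta> (e t)", OF dps_deriv_w[OF g]]) (auto intro!: derivative_eq_intros)
  then show ?thesis using deriv_cong_ev[OF ev refl] by (simp add: pd_z2_def DERIV_imp_deriv)
qed

lemma pd_z1_dps_rep:
  assumes g: "dps_conv \<rho>0 R0 \<beta>" and G: "dps_rep \<rho>0 R0 \<beta> G" and a: "dps_adm \<rho>0 R0 t z1 z2"
  shows "pd_z1 G t z1 z2 = z2 * dps (coeff_dw \<beta>) (e t) (z1 * z2)"
proof -
  have ev: "eventually (\<lambda>x. G t x z2 = dps \<beta> (e t) (x * z2)) (nhds z1)"
    using dps_adm_eventually(2)[OF a] G by (auto simp: dps_rep_def elim!: eventually_mono)
  have "((\<lambda>x. dps \<beta> (e t) (x * z2)) has_field_derivative dps (coeff_dw \<beta>) (e t) (z1 * z2) * z2) (at z1)"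
    using a unfolding dps_adm_def
    by (intro DERIV_chain2[where f="dps \<beta> (e t)", OF dps_deriv_w[OF g]]) (auto intro!: derivative_eq_intros)
  then show ?thesis using deriv_cong_ev[OF ev refl] by (simp add: pd_z1_def DERIV_imp_deriv)
qed

lemma pd_z1z2_dps_rep:
  assumes g: "dps_conv \<rho>0 R0 \<beta>" and G: "dps_rep \<rho>0 R0 \<beta> G" and a: "dps_adm \<rho>0 R0 t z1 z2"
  shows "pd_z1 (pd_z2 G) t z1 z2
    = dps (coeff_dw \<beta>) (e t) (z1 * z2) + z1 * z2 * dps (coeff_dw (coeff_dw \<beta>)) (e t) (z1 * z2)"
proof -
  have ev: "eventually (\<lambda>x. pd_z2 G t x z2 = x * dps (coeff_dw \<beta>) (e t) (x * z2)) (nhds z1)"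
    using dps_adm_eventually(2)[OF a] by (auto elim!: eventually_mono simp: pd_z2_dps_rep[OF g G])
  have "((\<lambda>x. dps (coeff_dw \<beta>) (e t) (x * z2)) has_field_derivative
      dps (coeff_dw (coeff_dw \<beta>)) (e t) (z1 * z2) * z2) (at z1)"
    using a unfolding dps_adm_def
    by (intro DERIV_chain2[where f="dps (coeff_dw \<beta>) (e t)", OF dps_deriv_w[OF dps_conv_dw[OF g]]])
      (auto intro!: derivative_eq_intros)
  from DERIV_mult[OF DERIV_ident this]
  have "((\<lambda>x. x * dps (coeff_dw \<beta>) (e t) (x * z2)) has_field_derivative
      dps (coeff_dw \<beta>) (e t) (z1 * z2) + z1 * z2 * dps (coeff_dw (coeff_dw \<beta>)) (e t) (z1 * z2)) (at z1)"
    by (simp add: algebra_simps)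
  then show ?thesis using deriv_cong_ev[OF ev refl] by (simp add: pd_z1_def DERIV_imp_deriv)
qed

lemma L_op_dps_rep:
  assumes g: "dps_conv \<rho>0 R0 \<beta>" and G: "dps_rep \<rho>0 R0 \<beta> G"
  shows "dps_rep \<rho>0 R0 (coeff_L (8 * complex_of_real pi * \<i> * of_nat m) c \<beta>) (L_op c m G)"
  unfolding dps_rep_def
proof (intro allI impI)
  fix t z1 z2 assume a: "dps_adm \<rho>0 R0 t z1 z2"
  then have z: "z1 \<noteq> 0" "z2 \<noteq> 0" and t: "norm (e t) < \<rho>0" and w: "norm (z1 * z2) < R0"
    by (auto simp: dps_adm_def)
  show "L_op c m G t z1 z2 = dps (coeff_L (8 * complex_of_real pi * \<i> * of_nat m) c \<beta>) (e t) (z1 * z2)"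
    using z by (simp add: L_op_def pd_tau_dps_rep[OF g G a] pd_z1_dps_rep[OF g G a] pd_z2_dps_rep[OF g G a]
        pd_z1z2_dps_rep[OF g G a] dps_coeff_L[OF g t w] field_simps)
qed

subsection \<open>Iterating the heat operators\<close>

fun coeff_iter :: "(nat \<Rightarrow> nat \<Rightarrow> complex) \<Rightarrow> complex \<Rightarrow> nat \<Rightarrow> nat \<Rightarrow> nat \<Rightarrow> nat \<Rightarrow> complex" where
  "coeff_iter \<beta> A k 0 = \<beta>"
| "coeff_iter \<beta> A k (Suc j) = coeff_L A (int k + 2 * int j) (coeff_iter \<beta> A k j)"

lemma dps_conv_coeff_iter: "dps_conv \<rho>0 R0 \<beta> \<Longrightarrow> dps_conv \<rho>0 R0 (coeff_iter \<beta> A k j)"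
  by (induction j) (auto intro: dps_conv_coeff_L)

lemma Dtilde_dps_rep:
  assumes "dps_conv \<rho>0 R0 \<beta>" "dps_rep \<rho>0 R0 \<beta> G"
  shows "dps_rep \<rho>0 R0 (coeff_iter \<beta> (8 * complex_of_real pi * \<i> * of_nat m) k j) (Dtilde k m j G)"
  by (induction j) (auto intro: L_op_dps_rep dps_conv_coeff_iter assms)

text \<open>The closed form of the iteration: \<open>coeff_iter \<beta> A k j n a\<close> is a combination of the entries
  \<open>\<beta> n (a + j - \<mu>)\<close> weighted by \<open>(2\<pi>i n A)\<^sup>\<mu>\<close> and the following rational coefficients.\<close>
definition Kcoef :: "nat \<Rightarrow> nat \<Rightarrow> nat \<Rightarrow> nat \<Rightarrow> complex" where
  "Kcoef k j \<mu> a = of_nat (j choose \<mu>) * (-4) ^ (j - \<mu>) * pochhammer (of_nat a + 1) (j - \<mu>)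
     * pochhammer (of_nat (a + k + j) - 1) (j - \<mu>)"

lemma Kcoef_vanish: "Kcoef k j (Suc j) a = 0"
  by (simp add: Kcoef_def)

lemma binomial_ratio: "i < j \<Longrightarrow> (j choose i) * (j - i) = (j choose Suc i) * Suc i"
proof -
  assume "i < j"
  have "Suc j * (j choose i) = (j choose i) * Suc i + (j choose Suc i) * Suc i"
    using Suc_times_binomial_eq[of j i] by (simp add: algebra_simps)
  then have "(j choose i) * (Suc j - Suc i) = (j choose Suc i) * Suc i"
    by (simp add: diff_mult_distrib2 algebra_simps)
  then show ?thesis by simp
qed

text \<open>The ring identity behind the recursion for \<open>\<mu> > 0\<close>, once the Pochhammer symbols are peeled.\<close>
lemma Kcoef_step_identity:
  fixes b0 b1 Q A1 P1 P2 X D I :: complex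
  assumes "b0 * (D + 1) = b1 * (I + 1)"
  shows "(b0 + b1) * ((-4) * Q) * (A1 * P1) * (P2 * (X + D))
     = b0 * ((-4) * Q) * (A1 * P1) * ((X - 1) * P2) - 4 * A1 * (X + I + (D + 1)) * (b1 * Q * P1 * P2)"
proof -
  have "(b0 + b1) * (X + D) = b0 * (X - 1) + b1 * (X + I + (D + 1))"
    using assms by (simp add: algebra_simps)
  then have "(-4 * Q * A1 * P1 * P2) * ((b0 + b1) * (X + D))
      = (-4 * Q * A1 * P1 * P2) * (b0 * (X - 1) + b1 * (X + I + (D + 1)))"
    by simp
  then show ?thesis by algebra
qed

lemma Kcoef_rec_0:
  "Kcoef k (Suc j) 0 a = - (4 * of_nat (Suc a) * of_nat (a + k + 2 * j) * Kcoef k j 0 (Suc a))"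
proof -
  define P1 where "P1 = pochhammer (of_nat a + 2 :: complex) j"
  define P2 where "P2 = pochhammer (of_nat (a + k + j) :: complex) j"
  have e1: "pochhammer (of_nat a + 1 :: complex) (Suc j) = (of_nat a + 1) * P1"
    by (simp add: P1_def pochhammer_rec add.assoc)
  have e2: "pochhammer (of_nat (a + k + j) :: complex) (Suc j) = P2 * (of_nat (a + k + j) + of_nat j)"
    by (simp add: P2_def pochhammer_Suc)
  have e3: "pochhammer (of_nat (Suc a) + 1 :: complex) j = P1"
    by (simp add: P1_def add.assoc add.commute)
  have "Kcoef k (Suc j) 0 a = (-4) ^ Suc j * ((of_nat a + 1) * P1) * (P2 * (of_nat (a + k + j) + of_nat j))"
    using e1 e2 by (simp add: Kcoef_def)
  moreover have "Kcoef k j 0 (Suc a) = (-4) ^ j * P1 * P2"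
    using e3 by (simp add: Kcoef_def P2_def)
  ultimately show ?thesis by (simp add: algebra_simps)
qed

lemma Kcoef_rec_Suc:
  assumes "i < j"
  shows "Kcoef k (Suc j) (Suc i) a
    = Kcoef k j i a - 4 * of_nat (Suc a) * of_nat (a + k + 2 * j) * Kcoef k j (Suc i) (Suc a)"
proof -
  obtain d where d: "j = i + Suc d" using assms less_iff_Suc_add[of i j] by auto
  have jd: "Suc j - Suc i = Suc d" "j - i = Suc d" "j - Suc i = d" using d by auto
  have b: "of_nat (j choose i) * (of_nat d + 1) = (of_nat (j choose Suc i) * (of_nat i + 1) :: complex)"
    using arg_cong[OF binomial_ratio[OF assms], of "of_nat :: nat \<Rightarrow> complex"] jd(2) by (simp add: algebra_simps)
  define P1 where "P1 = pochhammer (of_nat a + 2 :: complex) d"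
  define P2 where "P2 = pochhammer (of_nat (a + k + j) :: complex) d"
  have e1: "pochhammer (of_nat a + 1 :: complex) (Suc d) = (of_nat a + 1) * P1"
    by (simp add: P1_def pochhammer_rec add.assoc)
  have e2: "pochhammer (of_nat (a + k + j) :: complex) (Suc d) = P2 * (of_nat (a + k + j) + of_nat d)"
    by (simp add: P2_def pochhammer_Suc)
  have e3: "pochhammer (of_nat (a + k + j) - 1 :: complex) (Suc d) = (of_nat (a + k + j) - 1) * P2"
    by (simp add: P2_def pochhammer_rec)
  have E1: "Kcoef k (Suc j) (Suc i) a = (of_nat (j choose i) + of_nat (j choose Suc i))
      * ((-4) * (-4) ^ d) * ((of_nat a + 1) * P1) * (P2 * (of_nat (a + k + j) + of_nat d))"
    using e1 e2 by (simp add: Kcoef_def jd)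
  have E2: "Kcoef k j i a = of_nat (j choose i) * ((-4) * (-4) ^ d) * ((of_nat a + 1) * P1)
      * ((of_nat (a + k + j) - 1) * P2)"
    using e1 e3 by (simp add: Kcoef_def jd)
  have E3: "Kcoef k j (Suc i) (Suc a) = of_nat (j choose Suc i) * (-4) ^ d * P1 * P2"
    by (simp add: Kcoef_def jd P1_def P2_def add.assoc add.commute)
  have E4: "of_nat (a + k + 2 * j) = (of_nat (a + k + j) + of_nat i + (of_nat d + 1) :: complex)"
    using d by simp
  show ?thesis
    unfolding E1 E2 E3 E4 of_nat_Suc add.commute[of 1] by (rule Kcoef_step_identity[OF b])
qed

lemma Kcoef_rec:
  assumes "\<mu> \<le> Suc j"
  shows "Kcoef k (Suc j) \<mu> a = (if \<mu> = 0 then 0 else Kcoef k j (\<mu> - 1) a)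
           - 4 * of_nat (Suc a) * of_nat (a + k + 2 * j) * Kcoef k j \<mu> (Suc a)"
proof (cases \<mu>)
  case 0
  then show ?thesis by (simp add: Kcoef_rec_0)
next
  case (Suc i)
  show ?thesis
  proof (cases "i = j")
    case True
    then show ?thesis unfolding Suc Kcoef_def by simp
  next
    case False
    with assms Suc show ?thesis by (simp add: Kcoef_rec_Suc)
  qed
qed

lemma coeff_iter_closed_form:
  "coeff_iter \<beta> A k j n a
    = (\<Sum>\<mu>\<le>j. Kcoef k j \<mu> a * (A * (2 * complex_of_real pi * \<i> * of_nat n)) ^ \<mu> * \<beta> n (a + j - \<mu>))"
proof (induction j arbitrary: a)
  case 0
  then show ?case by (simp add: Kcoef_def)
next
  case (Suc j)
  define l where "l = A * (2 * complex_of_real pi * \<i> * of_nat n)"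
  define C where "C = 4 * of_nat (Suc a) * (of_nat (a + k + 2 * j) :: complex)"
  define K' where "K' = (\<lambda>\<mu>. if \<mu> = 0 then 0 else Kcoef k j (\<mu> - 1) a)"
  have "coeff_iter \<beta> A k (Suc j) n a = l * coeff_iter \<beta> A k j n a - C * coeff_iter \<beta> A k j n (Suc a)"
    by (simp add: coeff_L_def coeff_dtau_def l_def C_def algebra_simps)
  also have "l * coeff_iter \<beta> A k j n a = (\<Sum>\<mu>\<le>Suc j. K' \<mu> * l ^ \<mu> * \<beta> n (a + Suc j - \<mu>))"
    unfolding Suc.IH l_def[symmetric] K'_def
    by (subst sum.atMost_Suc_shift) (simp add: sum_distrib_left algebra_simps)
  also have "coeff_iter \<beta> A k j n (Suc a) = (\<Sum>\<mu>\<le>Suc j. Kcoef k j \<mu> (Suc a) * l ^ \<mu> * \<beta> n (a + Suc j - \<mu>))"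
    unfolding Suc.IH l_def[symmetric] by (simp add: Kcoef_vanish)
  also have "(\<Sum>\<mu>\<le>Suc j. K' \<mu> * l ^ \<mu> * \<beta> n (a + Suc j - \<mu>))
      - C * (\<Sum>\<mu>\<le>Suc j. Kcoef k j \<mu> (Suc a) * l ^ \<mu> * \<beta> n (a + Suc j - \<mu>))
      = (\<Sum>\<mu>\<le>Suc j. (K' \<mu> - C * Kcoef k j \<mu> (Suc a)) * l ^ \<mu> * \<beta> n (a + Suc j - \<mu>))"
    by (simp add: sum_distrib_left sum_subtractf algebra_simps)
  also have "\<dots> = (\<Sum>\<mu>\<le>Suc j. Kcoef k (Suc j) \<mu> a * l ^ \<mu> * \<beta> n (a + Suc j - \<mu>))"
    by (intro sum.cong refl) (simp add: Kcoef_rec K'_def C_def)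
  finally show ?case by (simp add: l_def)
qed

lemma coeff_dtau_pow: "(coeff_dtau ^^ \<mu>) \<beta> n a = (2 * complex_of_real pi * \<i> * of_nat n) ^ \<mu> * \<beta> n a"
  by (induction \<mu>) (auto simp: coeff_dtau_def)

lemma dps_conv_dtau_pow: "dps_conv \<rho>0 R0 \<beta> \<Longrightarrow> dps_conv \<rho>0 R0 ((coeff_dtau ^^ \<mu>) \<beta>)"
  by (induction \<mu>) (auto intro: dps_conv_dtau)

lemma dps_col_coeff_iter:
  assumes g: "dps_conv \<rho>0 R0 \<beta>" and R0: "0 < R0" and q: "norm q < \<rho>0"
  shows "dps_col (coeff_iter \<beta> A k \<nu>) 0 q
    = (\<Sum>\<mu>\<le>\<nu>. Kcoef k \<nu> \<mu> 0 * A ^ \<mu> * dps_col ((coeff_dtau ^^ \<mu>) \<beta>) (\<nu> - \<mu>) q)"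
proof -
  note col = dps_col_summable[OF dps_conv_dtau_pow[OF g] R0 q]
  have "dps_col (coeff_iter \<beta> A k \<nu>) 0 q
      = (\<Sum>n. \<Sum>\<mu>\<le>\<nu>. (Kcoef k \<nu> \<mu> 0 * A ^ \<mu>) * ((coeff_dtau ^^ \<mu>) \<beta> n (\<nu> - \<mu>) * q ^ n))"
    unfolding dps_col_def coeff_iter_closed_form coeff_dtau_pow
    by (intro suminf_cong) (simp add: sum_distrib_left sum_distrib_right power_mult_distrib mult_ac)
  also have "\<dots> = (\<Sum>\<mu>\<le>\<nu>. \<Sum>n. (Kcoef k \<nu> \<mu> 0 * A ^ \<mu>) * ((coeff_dtau ^^ \<mu>) \<beta> n (\<nu> - \<mu>) * q ^ n))"
    by (intro suminf_sum summable_mult col)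
  also have "\<dots> = (\<Sum>\<mu>\<le>\<nu>. Kcoef k \<nu> \<mu> 0 * A ^ \<mu> * dps_col ((coeff_dtau ^^ \<mu>) \<beta>) (\<nu> - \<mu>) q)"
    unfolding dps_col_def by (intro sum.cong refl) (simp add: suminf_mult col)
  finally show ?thesis .
qed

lemma Kcoef_at_zero:
  assumes "k > 0" "\<mu> \<le> \<nu>"
  shows "Kcoef k \<nu> \<mu> 0 = of_nat (fact \<nu>) * ((-4) ^ (\<nu> - \<mu>) *
     (of_nat (fact (k + 2 * \<nu> - \<mu> - 2)) / (of_nat (fact \<mu>) * of_nat (fact (k + \<nu> - 2)))))"
proof -
  have f1: "of_nat (\<nu> choose \<mu>) * (fact (\<nu> - \<mu>) :: complex) = of_nat (fact \<nu>) / of_nat (fact \<mu>)"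
  proof -
    have "of_nat (fact \<mu>) * of_nat (fact (\<nu> - \<mu>)) * of_nat (\<nu> choose \<mu>) = (of_nat (fact \<nu>) :: complex)"
      using binomial_fact_lemma[OF assms(2)] by (metis of_nat_mult)
    then show ?thesis by (simp add: field_simps)
  qed
  have f2: "pochhammer (of_nat (k + \<nu>) - 1) (\<nu> - \<mu>)
      = (of_nat (fact (k + 2 * \<nu> - \<mu> - 2)) / of_nat (fact (k + \<nu> - 2)) :: complex)"
  proof (cases "k + \<nu> \<ge> 2")
    case True
    have x: "of_nat (k + \<nu>) - 1 = (of_nat (k + \<nu> - 2) + 1 :: complex)" using True by (simp add: of_nat_diff)
    have y: "k + 2 * \<nu> - \<mu> - 2 = (k + \<nu> - 2) + (\<nu> - \<mu>)" using True assms(2) by simp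
    have "fact (k + 2 * \<nu> - \<mu> - 2) = (fact (k + \<nu> - 2) * pochhammer (of_nat (k + \<nu> - 2) + 1) (\<nu> - \<mu>) :: complex)"
      unfolding y pochhammer_fact pochhammer_product' by (simp add: add.commute)
    then show ?thesis unfolding x by (simp add: field_simps)
  next
    case False
    then have "k = 1" "\<nu> = 0" using assms by auto
    then show ?thesis using assms by simp
  qed
  show ?thesis unfolding Kcoef_def using f1 f2 by (simp add: pochhammer_fact[symmetric] field_simps)
qed

lemma deriv_iter_dps_col:
  assumes g: "dps_conv \<rho>0 R0 \<beta>" and R0: "0 < R0"
    and f: "\<And>s. norm (e s) < \<rho>0 \<Longrightarrow> f s = dps_col \<beta> a (e s)"
    and s: "norm (e s) < \<rho>0"
  shows "(deriv ^^ \<mu>) f s = dps_col ((coeff_dtau ^^ \<mu>) \<beta>) a (e s)"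
  using s
proof (induction \<mu> arbitrary: s)
  case 0
  then show ?case by (simp add: f)
next
  case (Suc \<mu>)
  have ev: "eventually (\<lambda>s'. (deriv ^^ \<mu>) f s' = dps_col ((coeff_dtau ^^ \<mu>) \<beta>) a (e s')) (nhds s)"
    using eventually_nhds_in_open[OF open_e_small, of s \<rho>0] Suc.prems
    by (auto elim!: eventually_mono simp: Suc.IH)
  have "(deriv ^^ Suc \<mu>) f s = deriv (\<lambda>s'. dps_col ((coeff_dtau ^^ \<mu>) \<beta>) a (e s')) s"
    using deriv_cong_ev[OF ev refl] by simp
  also have "\<dots> = dps_col ((coeff_dtau ^^ Suc \<mu>) \<beta>) a (e s)"
    using DERIV_imp_deriv[OF dps_col_deriv[OF dps_conv_dtau_pow[OF g] R0 Suc.prems]] by simp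
  finally show ?case .
qed

subsection \<open>Uniqueness of Taylor coefficients\<close>

lemma diffs_iter: "(diffs ^^ j) c n = pochhammer (of_nat n + 1) j * c (n + j)"
proof (induction j arbitrary: n)
  case 0
  then show ?case by simp
next
  case (Suc j)
  have "(diffs ^^ Suc j) c n = of_nat (Suc n) * (diffs ^^ j) c (Suc n)" by (simp add: diffs_def)
  also have "\<dots> = of_nat (Suc n) * (pochhammer (of_nat (Suc n) + 1) j * c (Suc n + j))" using Suc by simp
  also have "\<dots> = pochhammer (of_nat n + 1) (Suc j) * c (n + Suc j)"
    by (simp add: pochhammer_rec add_ac mult.assoc)
  finally show ?case .
qed

text \<open>A power series vanishing on a disc has zero coefficients: differentiate \<open>n\<close> times at \<open>0\<close>.\<close>
lemma powser_zero_coeffs: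
  fixes c :: "nat \<Rightarrow> complex"
  assumes d: "0 < \<delta>" and s: "\<And>z. norm z < \<delta> \<Longrightarrow> (\<lambda>n. c n * z ^ n) sums 0"
  shows "c n = 0"
proof -
  have "\<forall>z. norm z < \<delta> \<longrightarrow> (\<lambda>n. (diffs ^^ j) c n * z ^ n) sums 0" for j
  proof (induction j)
    case 0
    then show ?case using s by simp
  next
    case (Suc j)
    show ?case
    proof (intro allI impI)
      fix z :: complex assume z: "norm z < \<delta>"
      have "(\<lambda>n. diffs ((diffs ^^ j) c) n * z ^ n) sums 0"
        by (rule termdiffs_sums_strong[of \<delta> _ "\<lambda>_. 0"]) (use Suc z in auto)
      then show "(\<lambda>n. (diffs ^^ Suc j) c n * z ^ n) sums 0" by simp
    qed
  qed
  from this[of n] d have "(\<lambda>k. (diffs ^^ n) c k * 0 ^ k) sums 0" by (metis norm_zero)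
  then have "fact n * c n = 0" by (simp add: diffs_iter pochhammer_fact[symmetric])
  then show ?thesis by simp
qed

lemma powser2_zero_coeffs:
  fixes d :: "nat \<Rightarrow> nat \<Rightarrow> complex"
  assumes dl: "0 < \<delta>"
    and s: "\<And>z1 z2. norm z1 < \<delta> \<Longrightarrow> norm z2 < \<delta> \<Longrightarrow>
      ((\<lambda>(a, b). d a b * z1 ^ a * z2 ^ b) has_sum 0) UNIV"
  shows "d a b = 0"
proof -
  define c where "c = (\<lambda>z2 a. \<Sum>b. d a b * z2 ^ b)"
  have F: "((\<lambda>(a, b). d a b * z1 ^ a * z2 ^ b) has_sum (\<Sum>a. \<Sum>b. d a b * z1 ^ a * z2 ^ b)) UNIV"
    and Fs: "summable (\<lambda>a. \<Sum>b. d a b * z1 ^ a * z2 ^ b)"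
    and rows: "summable (\<lambda>b. d a b * z1 ^ a * z2 ^ b)"
    if "norm z1 < \<delta>" "norm z2 < \<delta>" for z1 z2 a
    using nat_pair_fubini(1,3,5)[of "\<lambda>a b. d a b * z1 ^ a * z2 ^ b"] s[OF that] by (auto simp: summable_on_def)
  define z0 :: complex where "z0 = of_real (\<delta> / 2)"
  have z0: "norm z0 < \<delta>" "z0 \<noteq> 0" using dl by (auto simp: z0_def)
  have row: "summable (\<lambda>b. d a b * z2 ^ b)" if "norm z2 < \<delta>" for a z2
    using summable_mult2[OF rows[OF z0(1) that, of a], of "inverse (z0 ^ a)"] z0(2)
    by (simp add: field_simps)
  have c0: "c z2 a = 0" if z2: "norm z2 < \<delta>" for z2 a
  proof (rule powser_zero_coeffs[OF dl])
    fix z1 :: complex assume z1: "norm z1 < \<delta>"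
    have "(\<Sum>b. d a b * z1 ^ a * z2 ^ b) = c z2 a * z1 ^ a" for a
      using suminf_mult2[OF row[OF z2, of a], of "z1 ^ a"] by (simp add: c_def mult_ac)
    then show "(\<lambda>a. c z2 a * z1 ^ a) sums 0"
      using summable_sums[OF Fs[OF z1 z2]] has_sum_unique[OF F(1)[OF z1 z2] s[OF z1 z2]] by simp
  qed
  show ?thesis
  proof (rule powser_zero_coeffs[OF dl])
    fix z :: complex assume "norm z < \<delta>"
    then show "(\<lambda>b. d a b * z ^ b) sums 0"
      using summable_sums[OF row] c0 by (simp add: c_def)
  qed
qed

subsection \<open>From the Fourier expansion to the Taylor expansion\<close>

definition fourier_support :: "nat \<Rightarrow> nat \<Rightarrow> complex set" where
  "fourier_support m n = {r. r \<in> gauss_dual \<and> normK r \<le> real (n * m)}"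

definition fourier_expansion ::
    "nat \<Rightarrow> (nat \<Rightarrow> complex \<Rightarrow> complex) \<Rightarrow> (complex \<Rightarrow> complex \<Rightarrow> complex \<Rightarrow> complex) \<Rightarrow> bool" where
  "fourier_expansion m cf \<phi> \<longleftrightarrow> (\<forall>t\<in>upper_half. \<forall>z1 z2.
     ((\<lambda>(n, r). cf n r * e (of_nat n * t + r * z1 + cnj r * z2)) has_sum \<phi> t z1 z2)
       (Sigma UNIV (fourier_support m)))"

lemma jacobi_forms_fourier_expansion:
  assumes "\<phi> \<in> jacobi_forms k m"
  obtains cf where "fourier_expansion m cf \<phi>"
proof -
  have eq: "{(n, r). r \<in> gauss_dual \<and> normK r \<le> real (n * m)} = Sigma UNIV (fourier_support m)"
    by (auto simp: fourier_support_def)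
  from assms obtain cf where "\<forall>t\<in>upper_half. \<forall>z1 z2.
      ((\<lambda>(n, r). cf n r * e (of_nat n * t + r * z1 + cnj r * z2)) has_sum \<phi> t z1 z2)
        {(n, r). r \<in> gauss_dual \<and> normK r \<le> real (n * m)}"
    unfolding jacobi_forms_def by blast
  then show ?thesis using that[of cf] unfolding fourier_expansion_def eq by blast
qed

lemma normK_norm: "normK r = norm r ^ 2"
  by (simp add: normK_def complex_mult_cnj cmod_power2)

text \<open>Evaluating the expansion at \<open>z\<^sub>1 = z\<^sub>2 = 0\<close> on the imaginary axis: the coefficients are
  absolutely summable against \<open>\<tau>\<^sup>n\<close> for every \<open>0 \<le> \<tau> < 1\<close>.\<close>
lemma fourier_abs_summable:
  assumes F: "fourier_expansion m cf \<phi>" and t: "0 \<le> \<tau>" "\<tau> < 1"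
  shows "(\<lambda>(n, r). norm (cf n r) * \<tau> ^ n) summable_on Sigma UNIV (fourier_support m)"
proof -
  define \<tau>' where "\<tau>' = (\<tau> + 1) / 2"
  have t': "0 < \<tau>'" "\<tau>' < 1" "\<tau> \<le> \<tau>'" using t by (auto simp: \<tau>'_def)
  define t0 where "t0 = \<i> * complex_of_real (- ln \<tau>' / (2 * pi))"
  have ne: "norm (e t0) = \<tau>'" using t' by (simp add: norm_e t0_def)
  then have "t0 \<in> upper_half" using t' by (intro e_small_imp_upper_half) simp
  then have "((\<lambda>(n, r). cf n r * e (of_nat n * t0 + r * 0 + cnj r * 0)) has_sum \<phi> t0 0 0)
      (Sigma UNIV (fourier_support m))"
    using F unfolding fourier_expansion_def by blast
  then have "(\<lambda>(n, r). cf n r * e (of_nat n * t0)) summable_on Sigma UNIV (fourier_support m)"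
    by (auto simp: summable_on_def)
  then have "(\<lambda>x. norm ((\<lambda>(n, r). cf n r * e (of_nat n * t0)) x)) summable_on Sigma UNIV (fourier_support m)"
    by (simp add: summable_on_iff_abs_summable_on_complex)
  then have S: "(\<lambda>(n, r). norm (cf n r) * \<tau>' ^ n) summable_on Sigma UNIV (fourier_support m)"
    by (rule summable_on_cong[THEN iffD1, rotated]) (auto simp: e_mult norm_mult norm_power ne)
  show ?thesis
    by (rule summable_on_comparison_test[OF S]) (use t t' in \<open>auto intro!: mult_left_mono power_mono\<close>)
qed

lemma exp_series_eq: "(\<lambda>a. x ^ a /\<^sub>R fact a) = (\<lambda>a. x ^ a / fact a)"
  for x :: "'a :: real_normed_field"
  by (rule ext) (simp add: scaleR_conv_of_real divide_inverse)

lemma has_sum_exp: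
  fixes u :: "'a :: {real_normed_field, banach}"
  shows "((\<lambda>a. u ^ a / fact a) has_sum (exp u)) (UNIV :: nat set)"
proof -
  have s: "(\<lambda>a. u ^ a / fact a) sums exp u" using exp_converges[of u] unfolding exp_series_eq .
  have "(\<lambda>a. norm u ^ a / fact a) sums exp (norm u)" using exp_converges[of "norm u"] unfolding exp_series_eq .
  then have "summable (\<lambda>a. norm (u ^ a / fact a))" by (simp add: sums_summable norm_divide norm_power)
  then show ?thesis by (rule norm_summable_imp_has_sum[OF _ s])
qed

lemma has_sum_exp2:
  fixes u v :: "'a :: {real_normed_field, banach}"
  shows "((\<lambda>(a, b). u ^ a / fact a * (v ^ b / fact b)) has_sum exp u * exp v) UNIV"
proof -
  let ?f = "\<lambda>(a::nat, b::nat). u ^ a / fact a * (v ^ b / fact b)"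
  have hn: "((\<lambda>b. norm u ^ a / fact a * (norm v ^ b / fact b)) has_sum (norm u ^ a / fact a * exp (norm v))) UNIV"
    for a by (rule has_sum_cmult_right[OF has_sum_exp])
  have go: "(\<lambda>a. norm u ^ a / fact a * exp (norm v)) summable_on UNIV"
    using has_sum_cmult_left[OF has_sum_exp[of "norm u"], of "exp (norm v)"] by (auto simp: summable_on_def)
  have "(\<lambda>(a, b). norm u ^ a / fact a * (norm v ^ b / fact b)) summable_on Sigma UNIV (\<lambda>_. UNIV)"
    by (rule summable_on_SigmaI[OF _ go]) (use hn in auto)
  then have "(\<lambda>(a, b). norm u ^ a / fact a * (norm v ^ b / fact b)) summable_on UNIV" by simp
  then have "(\<lambda>x. norm (?f x)) summable_on UNIV"
    by (rule summable_on_cong[THEN iffD1, rotated]) (auto simp: norm_mult norm_divide norm_power)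
  then have sf: "?f summable_on Sigma UNIV (\<lambda>_. UNIV)" by (simp add: abs_summable_summable)
  then have H: "(?f has_sum infsum ?f UNIV) (Sigma UNIV (\<lambda>_. UNIV))"
    by (simp add: summable_iff_has_sum_infsum[symmetric])
  have inner: "((\<lambda>b. ?f (a, b)) has_sum (u ^ a / fact a * exp v)) UNIV" for a
    using has_sum_cmult_right[OF has_sum_exp[of v], of "u ^ a / fact a"] by simp
  have "((\<lambda>a. u ^ a / fact a * exp v) has_sum infsum ?f UNIV) UNIV"
    by (rule has_sum_SigmaD[OF H]) (use inner in auto)
  then have "infsum ?f UNIV = exp u * exp v"
    using has_sum_cmult_left[OF has_sum_exp[of u]] has_sum_unique by blast
  then show ?thesis using H by simp
qed

text \<open>Taylor coefficients of \<open>exp(2\<pi>i r z\<^sub>1) exp(2\<pi>i r\<^sup>- z\<^sub>2)\<close> at \<open>z\<^sub>1\<^sup>a z\<^sub>2\<^sup>b\<close>.\<close>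
definition exp_taylor_coeff :: "nat \<Rightarrow> nat \<Rightarrow> complex \<Rightarrow> complex" where
  "exp_taylor_coeff a b r =
     (2 * complex_of_real pi * \<i> * r) ^ a * (2 * complex_of_real pi * \<i> * cnj r) ^ b / (fact a * fact b)"

text \<open>The double power series in \<open>(q, w)\<close> obtained by collecting, in the Fourier expansion,
  the diagonal Taylor coefficients of the exponentials.\<close>
definition diag_fourier_coeff :: "(nat \<Rightarrow> complex \<Rightarrow> complex) \<Rightarrow> nat \<Rightarrow> nat \<Rightarrow> nat \<Rightarrow> complex" where
  "diag_fourier_coeff cf m n a = infsum (\<lambda>r. cf n r * exp_taylor_coeff a a r) (fourier_support m n)"

text \<open>On the Fourier support \<open>|r|\<^sup>2 \<le> nm\<close>, so the diagonal Taylor coefficients grow at most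
  like an exponential series in \<open>nm\<close>.\<close>
lemma exp_taylor_coeff_diag_bound:
  assumes "r \<in> fourier_support m n"
  shows "norm (exp_taylor_coeff a a r) \<le> (4 * pi ^ 2 * real (n * m)) ^ a / fact a"
proof -
  have nr: "norm r ^ 2 \<le> real (n * m)" using assms by (simp add: fourier_support_def normK_norm)
  have four: "(2::real) ^ a * 2 ^ a = 4 ^ a" by (simp flip: power_mult_distrib)
  have "norm (exp_taylor_coeff a a r) = (4 * pi ^ 2 * norm r ^ 2) ^ a / (fact a * fact a)"
    by (simp add: exp_taylor_coeff_def norm_mult norm_divide norm_power power_mult_distrib four
        power2_eq_square)
  also have "\<dots> \<le> (4 * pi ^ 2 * real (n * m)) ^ a / (fact a * fact a)"
    using nr by (intro divide_right_mono power_mono mult_left_mono) auto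
  also have "\<dots> \<le> (4 * pi ^ 2 * real (n * m)) ^ a / fact a"
    by (intro divide_left_mono) (auto simp: fact_ge_1)
  finally show ?thesis .
qed

lemma infsum_norm_le:
  fixes f g :: "'a \<Rightarrow> complex"
  assumes s: "(\<lambda>r. norm (f r)) summable_on A" and B: "0 \<le> B"
    and le: "\<And>r. r \<in> A \<Longrightarrow> norm (g r) \<le> B * norm (f r)"
  shows "norm (infsum g A) \<le> B * infsum (\<lambda>r. norm (f r)) A"
proof -
  have sB: "(\<lambda>r. B * norm (f r)) summable_on A" by (rule summable_on_cmult_right[OF s])
  have sg: "(\<lambda>r. norm (g r)) summable_on A" by (rule Infinite_Sum.abs_summable_on_comparison_test'[OF sB le])
  have "norm (infsum g A) \<le> infsum (\<lambda>r. norm (g r)) A" by (rule norm_infsum_bound[OF sg])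
  also have "\<dots> \<le> infsum (\<lambda>r. B * norm (f r)) A" by (rule infsum_mono[OF sg sB le])
  also have "\<dots> = B * infsum (\<lambda>r. norm (f r)) A" by (rule infsum_cmult_right'[where 'b=real])
  finally show ?thesis .
qed

text \<open>The Fourier coefficients of each row are absolutely summable, which bounds \<open>\<beta>(n,a)\<close>.\<close>
lemma diag_fourier_coeff_bound:
  assumes F: "fourier_expansion m cf \<phi>"
  shows "norm (diag_fourier_coeff cf m n a)
    \<le> (4 * pi ^ 2 * real (n * m)) ^ a / fact a * infsum (\<lambda>r. norm (cf n r)) (fourier_support m n)"
  unfolding diag_fourier_coeff_def
proof (rule infsum_norm_le)
  have "(\<lambda>r. norm (cf n r) * (1 / 2) ^ n) summable_on fourier_support m n"
    using summable_on_SigmaD1[of "\<lambda>n r. norm (cf n r) * (1/2) ^ n", OF fourier_abs_summable[OF F]] by simp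
  from summable_on_cmult_left[OF this, of "2 ^ n"]
  show "(\<lambda>r. norm (cf n r)) summable_on fourier_support m n" by (simp add: power_one_over)
  fix r assume "r \<in> fourier_support m n"
  from mult_right_mono[OF exp_taylor_coeff_diag_bound[OF this, of a], of "norm (cf n r)"]
  show "norm (cf n r * exp_taylor_coeff a a r) \<le> (4 * pi ^ 2 * real (n * m)) ^ a / fact a * norm (cf n r)"
    by (simp add: norm_mult mult.commute)
qed simp

text \<open>The collected series converges on a polydisc determined by \<open>m\<close>: the growth \<open>N(r) \<le> nm\<close>
  of the Fourier support turns the exponential series in \<open>w\<close> into a geometric factor in \<open>q\<close>.\<close>
lemma dps_conv_diag_fourier_coeff:
  assumes F: "fourier_expansion m cf \<phi>" and r0: "\<rho>0 * exp (4 * pi ^ 2 * real m * R0) \<le> 1"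
  shows "dps_conv \<rho>0 R0 (diag_fourier_coeff cf m)"
  unfolding dps_conv_def
proof (intro allI impI)
  fix \<rho> R :: real assume h: "0 \<le> \<rho>" "\<rho> < \<rho>0" "0 \<le> R" "R < R0"
  define \<tau> where "\<tau> = \<rho> * exp (4 * pi ^ 2 * real m * R)"
  have \<tau>: "0 \<le> \<tau>" "\<tau> < 1"
  proof -
    show "0 \<le> \<tau>" using h by (simp add: \<tau>_def)
    have "exp (4 * pi ^ 2 * real m * R) \<le> exp (4 * pi ^ 2 * real m * R0)"
      using h by (intro exp_mono mult_left_mono) auto
    then have "\<tau> \<le> \<rho> * exp (4 * pi ^ 2 * real m * R0)" using h by (simp add: \<tau>_def mult_left_mono)
    also have "\<dots> < \<rho>0 * exp (4 * pi ^ 2 * real m * R0)" using h by simp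
    finally show "\<tau> < 1" using r0 by simp
  qed
  define M where "M = (\<lambda>n. infsum (\<lambda>r. norm (cf n r)) (fourier_support m n))"
  define h where "h = (\<lambda>(n::nat, a::nat). M n * \<rho> ^ n * ((4 * pi ^ 2 * real (n * m) * R) ^ a / fact a))"
  have inner: "((\<lambda>a. h (n, a)) has_sum (M n * \<tau> ^ n)) UNIV" for n
  proof -
    have "exp (4 * pi ^ 2 * real (n * m) * R) = exp (4 * pi ^ 2 * real m * R) ^ n"
      by (simp add: exp_of_nat_mult[symmetric] algebra_simps)
    with has_sum_cmult_right[OF has_sum_exp[of "4 * pi ^ 2 * real (n * m) * R"], of "M n * \<rho> ^ n"]
    show ?thesis by (simp add: h_def \<tau>_def power_mult_distrib mult.assoc)
  qed
  have "(\<lambda>n. infsum (\<lambda>r. norm (cf n r) * \<tau> ^ n) (fourier_support m n)) summable_on UNIV"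
    using summable_on_Sigma_banach[of "\<lambda>n r. norm (cf n r) * \<tau> ^ n", OF fourier_abs_summable[OF F \<tau>]]
    by (simp add: case_prod_unfold)
  then have gs: "(\<lambda>n. M n * \<tau> ^ n) summable_on UNIV" by (simp add: M_def infsum_cmult_left')
  have M0: "0 \<le> M n" for n unfolding M_def by (intro infsum_nonneg) auto
  have "h summable_on Sigma UNIV (\<lambda>_. UNIV)"
    by (rule summable_on_SigmaI[OF _ gs]) (use inner h M0 in \<open>auto simp: h_def\<close>)
  then have hs: "h summable_on UNIV" by simp
  have le: "norm (diag_fourier_coeff cf m n a) * \<rho> ^ n * R ^ a \<le> h (n, a)" for n a
    using mult_right_mono[OF diag_fourier_coeff_bound[OF F, of n a], of "\<rho> ^ n * R ^ a"] h
    by (simp add: h_def M_def power_mult_distrib field_simps)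
  show "(\<lambda>(n, a). norm (diag_fourier_coeff cf m n a) * \<rho> ^ n * R ^ a) summable_on UNIV"
    by (rule summable_on_comparison_test[OF hs]) (use le h in \<open>auto split: prod.splits\<close>)
qed

text \<open>A linear bound for \<open>|r|\<close> in terms of \<open>N(r)\<close>, used to dominate \<open>exp(2\<pi>|r|s)\<close> by \<open>exp(2\<pi>s) exp(2\<pi>sm)\<^sup>n\<close>.\<close>
lemma norm_le_1_normK: "norm r \<le> 1 + normK r"
proof (cases "norm r \<le> 1")
  case False
  then have "norm r * 1 \<le> norm r * norm r" by (intro mult_left_mono) auto
  then show ?thesis by (simp add: normK_norm power2_eq_square)
qed (simp add: normK_norm add_increasing2)

text \<open>Radius on which the Taylor expansion of the Fourier series is justified.\<close>
lemma fourier_taylor_radius: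
  assumes \<sigma>: "0 < \<sigma>" "\<sigma> < 1" and m: "m > 0"
  obtains \<delta> :: real where "0 < \<delta>" and "\<And>s. s < 2 * \<delta> \<Longrightarrow> \<sigma> * exp (2 * pi * s * real m) < 1"
proof
  define \<delta> where "\<delta> = - ln \<sigma> / (4 * pi * real m)"
  show "0 < \<delta>" using \<sigma> m by (simp add: \<delta>_def divide_neg_pos)
  fix s :: real assume "s < 2 * \<delta>"
  then have "2 * pi * s * real m < - ln \<sigma>" using m by (simp add: \<delta>_def field_simps)
  then have "\<sigma> * exp (2 * pi * s * real m) < \<sigma> * exp (- ln \<sigma>)" using \<sigma> by simp
  also have "\<dots> = 1" using \<sigma> by (simp add: exp_minus)
  finally show "\<sigma> * exp (2 * pi * s * real m) < 1" .
qed

text \<open>The Fourier series with both exponentials in \<open>z\<^sub>1, z\<^sub>2\<close> expanded, as a family indexed by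
  \<open>((n, r), (a, b))\<close>.\<close>
definition fourier_taylor_term :: "(nat \<Rightarrow> complex \<Rightarrow> complex) \<Rightarrow> complex \<Rightarrow> complex \<Rightarrow> complex \<Rightarrow>
    (nat \<times> complex) \<times> (nat \<times> nat) \<Rightarrow> complex" where
  "fourier_taylor_term cf t z1 z2 = (\<lambda>((n, r), (a, b)). cf n r * e (of_nat n * t) *
     ((2 * complex_of_real pi * \<i> * r * z1) ^ a / fact a * ((2 * complex_of_real pi * \<i> * cnj r * z2) ^ b / fact b)))"

lemma fourier_taylor_term_eq:
  "fourier_taylor_term cf t z1 z2 ((n, r), (a, b)) = cf n r * e (of_nat n * t) * exp_taylor_coeff a b r * (z1 ^ a * z2 ^ b)"
  by (simp add: fourier_taylor_term_def exp_taylor_coeff_def power_mult_distrib field_simps)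

lemma fourier_taylor_term_inner:
  "((\<lambda>ab. fourier_taylor_term cf t z1 z2 ((n, r), ab)) has_sum cf n r * e (of_nat n * t + r * z1 + cnj r * z2)) UNIV"
proof -
  have "e (of_nat n * t) * (exp (2 * complex_of_real pi * \<i> * r * z1) * exp (2 * complex_of_real pi * \<i> * cnj r * z2))
      = e (of_nat n * t + r * z1 + cnj r * z2)"
    by (simp add: e_def exp_add[symmetric] algebra_simps)
  with has_sum_cmult_right[OF has_sum_exp2[of "2 * complex_of_real pi * \<i> * r * z1"
      "2 * complex_of_real pi * \<i> * cnj r * z2"], of "cf n r * e (of_nat n * t)"]
  show ?thesis by (simp add: fourier_taylor_term_def case_prod_unfold mult.assoc)
qed

text \<open>Absolute convergence of the expanded family, dominated by the Fourier coefficients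
  against \<open>(|e(t)| exp(2\<pi>(|z\<^sub>1|+|z\<^sub>2|)m))\<^sup>n\<close>.\<close>
lemma fourier_taylor_summable:
  assumes F: "fourier_expansion m cf \<phi>"
    and small: "norm (e t) * exp (2 * pi * (norm z1 + norm z2) * real m) < 1"
  shows "fourier_taylor_term cf t z1 z2 summable_on Sigma (Sigma UNIV (fourier_support m)) (\<lambda>_. UNIV)"
proof -
  define s where "s = norm z1 + norm z2"
  define \<sigma> where "\<sigma> = norm (e t)"
  define \<tau> where "\<tau> = \<sigma> * exp (2 * pi * s * real m)"
  have \<tau>: "0 \<le> \<tau>" "\<tau> < 1" using small by (simp_all add: \<tau>_def \<sigma>_def s_def)
  define gn where "gn = (\<lambda>(n::nat, r::complex). norm (cf n r) * \<sigma> ^ n *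
      (exp (2 * pi * norm r * norm z1) * exp (2 * pi * norm r * norm z2)))"
  have inner: "((\<lambda>ab. norm (fourier_taylor_term cf t z1 z2 (nr, ab))) has_sum gn nr) UNIV" for nr
  proof -
    obtain n r where nr: "nr = (n, r)" by fastforce
    from has_sum_cmult_right[OF has_sum_exp2[of "2 * pi * norm r * norm z1" "2 * pi * norm r * norm z2"],
        of "norm (cf n r) * \<sigma> ^ n"]
    show ?thesis
      by (simp add: nr gn_def fourier_taylor_term_def case_prod_unfold norm_mult norm_divide norm_power \<sigma>_def e_mult)
  qed
  have gs: "gn summable_on Sigma UNIV (fourier_support m)"
  proof (rule summable_on_comparison_test)
    show "(\<lambda>x. exp (2 * pi * s) * (case x of (n, r) \<Rightarrow> norm (cf n r) * \<tau> ^ n))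
        summable_on Sigma UNIV (fourier_support m)"
      by (intro summable_on_cmult_right fourier_abs_summable[OF F \<tau>])
    fix x assume x: "x \<in> Sigma UNIV (fourier_support m)"
    obtain n r where xn: "x = (n, r)" by fastforce
    have rn: "normK r \<le> real (n * m)" using x by (simp add: xn fourier_support_def)
    have "2 * pi * norm r * norm z1 + 2 * pi * norm r * norm z2 = 2 * pi * s * norm r"
      by (simp add: s_def algebra_simps)
    also have "\<dots> \<le> 2 * pi * s * (1 + real n * real m)"
      using norm_le_1_normK[of r] rn by (intro mult_left_mono) (auto simp: s_def)
    also have "\<dots> = 2 * pi * s + real n * (2 * pi * s * real m)" by (simp add: algebra_simps)
    finally have "exp (2 * pi * norm r * norm z1) * exp (2 * pi * norm r * norm z2)
        \<le> exp (2 * pi * s) * exp (2 * pi * s * real m) ^ n"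
      by (simp add: exp_add[symmetric] exp_of_nat_mult[symmetric])
    from mult_left_mono[OF this, of "norm (cf n r) * \<sigma> ^ n"]
    show "gn x \<le> exp (2 * pi * s) * (case x of (n, r) \<Rightarrow> norm (cf n r) * \<tau> ^ n)"
      by (simp add: xn gn_def \<tau>_def \<sigma>_def power_mult_distrib mult_ac)
    show "0 \<le> gn x" by (simp add: xn gn_def \<sigma>_def)
  qed
  have "(\<lambda>x. norm (fourier_taylor_term cf t z1 z2 x)) summable_on Sigma (Sigma UNIV (fourier_support m)) (\<lambda>_. UNIV)"
    by (rule summable_on_SigmaI[OF _ gs]) (use inner in auto)
  then show ?thesis by (simp add: abs_summable_summable)
qed

definition taylor_coeff :: "(nat \<Rightarrow> complex \<Rightarrow> complex) \<Rightarrow> nat \<Rightarrow> complex \<Rightarrow> nat \<Rightarrow> nat \<Rightarrow> complex" where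
  "taylor_coeff cf m t a b =
     infsum (\<lambda>(n, r). cf n r * e (of_nat n * t) * exp_taylor_coeff a b r) (Sigma UNIV (fourier_support m))"

text \<open>Each Taylor coefficient is given by an absolutely convergent sum (use a small nonzero
  \<open>z\<^sub>1 = z\<^sub>2\<close> and divide out its powers).\<close>
lemma taylor_coeff_summable:
  assumes F: "fourier_expansion m cf \<phi>" and t: "t \<in> upper_half" and m: "m > 0"
  shows "(\<lambda>(n, r). cf n r * e (of_nat n * t) * exp_taylor_coeff a b r) summable_on Sigma UNIV (fourier_support m)"
proof -
  obtain \<delta> where \<delta>: "0 < \<delta>" "\<And>s. s < 2 * \<delta> \<Longrightarrow> norm (e t) * exp (2 * pi * s * real m) < 1"
    using fourier_taylor_radius[OF _ norm_e_upper_half[OF t] m] by (auto simp: norm_e)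
  define z0 :: complex where "z0 = of_real (\<delta> / 2)"
  have z0: "z0 \<noteq> 0" "norm z0 + norm z0 < 2 * \<delta>" using \<delta>(1) by (auto simp: z0_def)
  have "(\<lambda>(ab, nr). fourier_taylor_term cf t z0 z0 (nr, ab))
      summable_on Sigma UNIV (\<lambda>_. Sigma UNIV (fourier_support m))"
    using fourier_taylor_summable[OF F \<delta>(2)[OF z0(2)]]
      summable_on_swap[of "fourier_taylor_term cf t z0 z0" "Sigma UNIV (fourier_support m)" UNIV] by simp
  from summable_on_SigmaD1[OF this, of "(a, b)"]
  have "(\<lambda>nr. fourier_taylor_term cf t z0 z0 (nr, (a, b))) summable_on Sigma UNIV (fourier_support m)"
    by simp
  then have "(\<lambda>nr. inverse (z0 ^ a * z0 ^ b) * fourier_taylor_term cf t z0 z0 (nr, (a, b)))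
      summable_on Sigma UNIV (fourier_support m)"
    by (rule summable_on_cmult_right)
  moreover have "(\<lambda>nr. inverse (z0 ^ a * z0 ^ b) * fourier_taylor_term cf t z0 z0 (nr, (a, b)))
      = (\<lambda>(n, r). cf n r * e (of_nat n * t) * exp_taylor_coeff a b r)"
    using z0(1) by (auto simp: fun_eq_iff fourier_taylor_term_eq field_simps)
  ultimately show ?thesis by simp
qed

text \<open>Near \<open>z\<^sub>1 = z\<^sub>2 = 0\<close>, rearranging the expanded family gives the Taylor expansion of \<open>\<phi>\<close>.\<close>
lemma fourier_taylor_expansion:
  assumes F: "fourier_expansion m cf \<phi>" and t: "t \<in> upper_half" and m: "m > 0"
    and small: "norm (e t) * exp (2 * pi * (norm z1 + norm z2) * real m) < 1"
  shows "((\<lambda>(a, b). taylor_coeff cf m t a b * z1 ^ a * z2 ^ b) has_sum \<phi> t z1 z2) UNIV"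
proof -
  define SS where "SS = Sigma UNIV (fourier_support m)"
  define T where "T = fourier_taylor_term cf t z1 z2"
  define I where "I = infsum T (Sigma SS (\<lambda>_. UNIV))"
  have H: "(T has_sum I) (Sigma SS (\<lambda>_. UNIV))"
    using fourier_taylor_summable[OF F small] by (simp add: T_def SS_def I_def summable_iff_has_sum_infsum[symmetric])
  have "((\<lambda>(n, r). cf n r * e (of_nat n * t + r * z1 + cnj r * z2)) has_sum I) SS"
    by (rule has_sum_SigmaD[OF H]) (use fourier_taylor_term_inner in \<open>auto simp: T_def\<close>)
  moreover have "((\<lambda>(n, r). cf n r * e (of_nat n * t + r * z1 + cnj r * z2)) has_sum \<phi> t z1 z2) SS"
    using F t unfolding fourier_expansion_def SS_def by blast
  ultimately have I: "I = \<phi> t z1 z2" by (rule has_sum_unique)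
  have inner: "((\<lambda>nr. T (nr, ab)) has_sum (case ab of (a, b) \<Rightarrow> taylor_coeff cf m t a b * z1 ^ a * z2 ^ b)) SS"
    for ab
  proof -
    obtain a b where ab: "ab = (a, b)" by fastforce
    have "((\<lambda>(n, r). cf n r * e (of_nat n * t) * exp_taylor_coeff a b r) has_sum taylor_coeff cf m t a b) SS"
      using taylor_coeff_summable[OF F t m, of a b]
      by (simp add: SS_def taylor_coeff_def summable_iff_has_sum_infsum[symmetric])
    from has_sum_cmult_left[OF this, of "z1 ^ a * z2 ^ b"]
    have "((\<lambda>(n, r). cf n r * e (of_nat n * t) * exp_taylor_coeff a b r * (z1 ^ a * z2 ^ b))
        has_sum taylor_coeff cf m t a b * (z1 ^ a * z2 ^ b)) SS"
      by (simp add: case_prod_unfold)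
    moreover have "(\<lambda>nr. T (nr, (a, b)))
        = (\<lambda>(n, r). cf n r * e (of_nat n * t) * exp_taylor_coeff a b r * (z1 ^ a * z2 ^ b))"
      by (auto simp: fun_eq_iff T_def fourier_taylor_term_eq)
    ultimately show ?thesis by (simp add: ab mult.assoc)
  qed
  have "((\<lambda>(ab, nr). T (nr, ab)) has_sum I) (Sigma UNIV (\<lambda>_. SS))"
    using has_sum_swap[THEN iffD1, OF H] by simp
  from has_sum_SigmaD[OF this] inner show ?thesis by (simp add: I)
qed

text \<open>By uniqueness of Taylor coefficients, these are the coefficients \<open>\<chi>\<^sub>a\<^sub>,\<^sub>b(t)\<close>.\<close>
lemma chi_eq_taylor_coeff:
  assumes F: "fourier_expansion m cf \<phi>"
    and C: "\<forall>s \<in> upper_half. \<forall>z1 z2. ((\<lambda>(a, b). chi a b s * z1 ^ a * z2 ^ b) has_sum \<phi> s z1 z2) UNIV"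
    and t: "t \<in> upper_half" and m: "m > 0"
  shows "chi a b t = taylor_coeff cf m t a b"
proof -
  obtain \<delta> where \<delta>: "0 < \<delta>" "\<And>s. s < 2 * \<delta> \<Longrightarrow> norm (e t) * exp (2 * pi * s * real m) < 1"
    using fourier_taylor_radius[OF _ norm_e_upper_half[OF t] m] by (auto simp: norm_e)
  have "chi a b t - taylor_coeff cf m t a b = 0"
  proof (rule powser2_zero_coeffs[OF \<delta>(1)])
    fix z1 z2 :: complex assume z: "norm z1 < \<delta>" "norm z2 < \<delta>"
    have small: "norm (e t) * exp (2 * pi * (norm z1 + norm z2) * real m) < 1" using \<delta>(2) z by simp
    have "((\<lambda>(a, b). chi a b t * z1 ^ a * z2 ^ b) has_sum \<phi> t z1 z2) UNIV" using C t by blast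
    from has_sum_add[OF this has_sum_cmult_right[OF fourier_taylor_expansion[OF F t m small], of "-1"]]
    show "((\<lambda>(a, b). (chi a b t - taylor_coeff cf m t a b) * z1 ^ a * z2 ^ b) has_sum 0) UNIV"
      by (simp add: case_prod_unfold algebra_simps)
  qed
  then show ?thesis by simp
qed

text \<open>On the diagonal, summing the Taylor coefficient over \<open>r\<close> first exhibits it as the column
  \<open>a\<close> of the collected double series, evaluated at \<open>q = e(t)\<close>.\<close>
lemma taylor_coeff_diag:
  assumes F: "fourier_expansion m cf \<phi>" and t: "t \<in> upper_half" and m: "m > 0"
  shows "taylor_coeff cf m t a a = dps_col (diag_fourier_coeff cf m) a (e t)"
proof -
  define g where "g = (\<lambda>n r. cf n r * e (of_nat n * t) * exp_taylor_coeff a a r)"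
  have G: "(\<lambda>(n, r). g n r) summable_on Sigma UNIV (fourier_support m)"
    using taylor_coeff_summable[OF F t m] by (simp add: g_def)
  have inn: "infsum (g n) (fourier_support m n) = diag_fourier_coeff cf m n a * e t ^ n" for n
  proof -
    have "infsum (g n) (fourier_support m n)
        = infsum (\<lambda>r. e t ^ n * (cf n r * exp_taylor_coeff a a r)) (fourier_support m n)"
      unfolding g_def e_mult by (simp add: mult_ac)
    also have "\<dots> = e t ^ n * diag_fourier_coeff cf m n a"
      unfolding diag_fourier_coeff_def by (rule infsum_cmult_right')
    finally show ?thesis by (simp add: mult.commute)
  qed
  have O: "(\<lambda>n. infsum (g n) (fourier_support m n)) summable_on UNIV"
    using summable_on_Sigma_banach[OF G] .
  have "taylor_coeff cf m t a a = infsum (\<lambda>n. infsum (g n) (fourier_support m n)) UNIV"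
    using infsum_Sigma'_banach[OF G] by (simp add: taylor_coeff_def g_def)
  also have "\<dots> = (\<Sum>n. diag_fourier_coeff cf m n a * e t ^ n)"
    using infsum_nat_eq_suminf(2)[OF O] by (simp add: inn)
  finally show ?thesis by (simp add: dps_col_def)
qed

lemma jacobi_diag_coeffs_dps:
  assumes F: "fourier_expansion m cf \<phi>"
    and C: "\<forall>s \<in> upper_half. \<forall>z1 z2. ((\<lambda>(a, b). chi a b s * z1 ^ a * z2 ^ b) has_sum \<phi> s z1 z2) UNIV"
    and m: "m > 0" and t: "t \<in> upper_half"
  obtains \<rho>0 R0 where "dps_conv \<rho>0 R0 (diag_fourier_coeff cf m)" and "0 < R0" and "norm (e t) < \<rho>0"
    and "\<And>a s. norm (e s) < \<rho>0 \<Longrightarrow> chi a a s = dps_col (diag_fourier_coeff cf m) a (e s)"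
proof
  define \<rho>0 where "\<rho>0 = (1 + norm (e t)) / 2"
  have \<rho>0: "0 < \<rho>0" "\<rho>0 < 1" "norm (e t) < \<rho>0" using norm_e_upper_half[OF t] by (auto simp: \<rho>0_def add_pos_nonneg)
  define R0 where "R0 = - ln \<rho>0 / (4 * pi ^ 2 * real m)"
  show "0 < R0" using \<rho>0 m by (simp add: R0_def divide_neg_pos)
  have "\<rho>0 * exp (4 * pi ^ 2 * real m * R0) = 1" using \<rho>0 m by (simp add: R0_def exp_minus)
  then show "dps_conv \<rho>0 R0 (diag_fourier_coeff cf m)" by (intro dps_conv_diag_fourier_coeff[OF F]) simp
  show "norm (e t) < \<rho>0" by (fact \<rho>0(3))
  fix a s assume "norm (e s) < \<rho>0"
  then have "s \<in> upper_half" using \<rho>0 by (intro e_small_imp_upper_half) simp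
  then show "chi a a s = dps_col (diag_fourier_coeff cf m) a (e s)"
    using chi_eq_taylor_coeff[OF F C _ m] taylor_coeff_diag[OF F _ m] by simp
qed

lemma diag_part_dps_rep:
  assumes "\<And>a s. norm (e s) < \<rho>0 \<Longrightarrow> chi a a s = dps_col \<beta> a (e s)"
  shows "dps_rep \<rho>0 R0 \<beta> (diag_part chi)"
  using assms by (simp add: dps_rep_def dps_adm_def diag_part_def dps_def)

subsection \<open>Evaluation at \<open>z\<^sub>1 = z\<^sub>2 = 0\<close>\<close>

lemma at_origin_off_axes_nontrivial:
  "\<not> trivial_limit (at (0::complex, 0::complex) within {p. fst p \<noteq> 0 \<and> snd p \<noteq> 0})"
  unfolding trivial_limit_within islimpt_approachable not_not
proof (intro allI impI)
  fix \<epsilon> :: real assume \<epsilon>: "0 < \<epsilon>"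
  define c :: complex where "c = of_real (\<epsilon> / 3)"
  have c: "c \<noteq> 0" "norm c = \<epsilon> / 3" using \<epsilon> by (auto simp: c_def)
  have "dist (c, c) (0, 0) \<le> norm c + norm c" using norm_Pair_le[of c c] by (simp add: dist_norm)
  then have d: "dist (c, c) (0, 0) < \<epsilon>" using \<epsilon> c(2) by linarith
  show "\<exists>x'\<in>{p :: complex \<times> complex. fst p \<noteq> 0 \<and> snd p \<noteq> 0}. x' \<noteq> (0, 0) \<and> dist x' (0, 0) < \<epsilon>"
    by (rule bexI[where x = "(c, c)"]) (use c(1) d in auto)
qed

text \<open>A represented function extends continuously to \<open>z\<^sub>1 z\<^sub>2 = 0\<close>, with value the constant
  term in \<open>w\<close> of the series, i.e. column \<open>0\<close>.\<close>
lemma Lim_dps_rep_at_origin: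
  assumes g: "dps_conv \<rho>0 R0 \<beta>" and G: "dps_rep \<rho>0 R0 \<beta> G" and t: "norm (e t) < \<rho>0" and R0: "0 < R0"
  shows "Lim (at (0, 0) within {p. fst p \<noteq> 0 \<and> snd p \<noteq> 0}) (\<lambda>p. G t (fst p) (snd p)) = dps_col \<beta> 0 (e t)"
proof -
  define W where "W = {p :: complex \<times> complex. fst p \<noteq> 0 \<and> snd p \<noteq> 0}"
  define g where "g = (\<lambda>p :: complex \<times> complex. dps \<beta> (e t) (fst p * snd p))"
  have cont: "isCont (dps \<beta> (e t)) 0" by (rule DERIV_isCont[OF dps_deriv_w[OF g t]]) (use R0 in simp)
  have "isCont g (0, 0)" unfolding g_def
    by (rule continuous_at_compose[of _ "\<lambda>p. fst p * snd p", unfolded o_def])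
      (use cont in \<open>auto intro!: continuous_intros\<close>)
  then have lim: "(g \<longlongrightarrow> g (0, 0)) (at (0, 0) within W)"
    by (simp add: isCont_def tendsto_within_subset[OF _ subset_UNIV])
  have op: "open {p :: complex \<times> complex. norm (fst p * snd p) < R0}"
    by (intro open_Collect_less continuous_intros)
  have "eventually (\<lambda>p :: complex \<times> complex. norm (fst p * snd p) < R0) (nhds (0, 0))"
    using eventually_nhds_in_open[OF op, of "(0, 0)"] R0 by simp
  then have "eventually (\<lambda>p. g p = G t (fst p) (snd p)) (at (0, 0) within W)"
    unfolding eventually_at_filter
    by (rule eventually_mono) (use G t in \<open>auto simp: W_def g_def dps_rep_def dps_adm_def\<close>)
  from Lim_transform_eventually[OF lim this]
  have "Lim (at (0, 0) within W) (\<lambda>p. G t (fst p) (snd p)) = g (0, 0)"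
    using at_origin_off_axes_nontrivial by (intro tendsto_Lim) (simp_all add: W_def)
  then show ?thesis by (simp add: W_def g_def dps_def)
qed

text \<open>The formula for \<open>D\<^sub>\<nu>\<phi>\<close>: represent \<open>\<phi>\<^sub>0\<close> by a double power series, push the heat
  operators through to the coefficients, evaluate column \<open>0\<close> in closed form.\<close>
theorem corollary3p8:
  fixes k m \<nu> :: nat and \<phi> :: "complex \<Rightarrow> complex \<Rightarrow> complex \<Rightarrow> complex"
    and chi :: "nat \<Rightarrow> nat \<Rightarrow> complex \<Rightarrow> complex" and t :: complex
  assumes "k > 0" and "m > 0"
    and "\<phi> \<in> jacobi_forms k m"
    and "\<forall>s \<in> upper_half. \<forall>z1 z2.
           ((\<lambda>(a, b). chi a b s * z1 ^ a * z2 ^ b) has_sum \<phi> s z1 z2) UNIV"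
    and "t \<in> upper_half"
  shows "D_op k m \<nu> chi t =
    of_nat (fact \<nu>) * (\<Sum>\<mu> = 0..\<nu>. (-4) ^ (\<nu> - \<mu>) * (8 * complex_of_real pi * \<i> * of_nat m) ^ \<mu> *
       (of_nat (fact (k + 2 * \<nu> - \<mu> - 2)) / (of_nat (fact \<mu>) * of_nat (fact (k + \<nu> - 2)))) *
       (deriv ^^ \<mu>) (chi (\<nu> - \<mu>) (\<nu> - \<mu>)) t)"
proof -
  obtain cf where F: "fourier_expansion m cf \<phi>"
    using jacobi_forms_fourier_expansion[OF assms(3)] .
  define \<beta> where "\<beta> = diag_fourier_coeff cf m"
  obtain \<rho>0 R0 where conv: "dps_conv \<rho>0 R0 \<beta>" and R0: "0 < R0" and t: "norm (e t) < \<rho>0"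
    and chi: "\<And>a s. norm (e s) < \<rho>0 \<Longrightarrow> chi a a s = dps_col \<beta> a (e s)"
    using jacobi_diag_coeffs_dps[OF F assms(4,2,5)] unfolding \<beta>_def by blast
  define A where "A = 8 * complex_of_real pi * \<i> * of_nat m"
  have rep: "dps_rep \<rho>0 R0 (coeff_iter \<beta> A k \<nu>) (Dtilde k m \<nu> (diag_part chi))"
    unfolding A_def by (intro Dtilde_dps_rep conv diag_part_dps_rep chi)
  have derivs: "(deriv ^^ \<mu>) (chi a a) t = dps_col ((coeff_dtau ^^ \<mu>) \<beta>) a (e t)" for \<mu> a
    by (rule deriv_iter_dps_col[OF conv R0 _ t]) (rule chi)
  have "D_op k m \<nu> chi t = dps_col (coeff_iter \<beta> A k \<nu>) 0 (e t)"
    unfolding D_op_def by (rule Lim_dps_rep_at_origin[OF dps_conv_coeff_iter[OF conv] rep t R0])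
  also have "\<dots> = (\<Sum>\<mu>\<le>\<nu>. Kcoef k \<nu> \<mu> 0 * A ^ \<mu> * dps_col ((coeff_dtau ^^ \<mu>) \<beta>) (\<nu> - \<mu>) (e t))"
    by (rule dps_col_coeff_iter[OF conv R0 t])
  also have "\<dots> = (\<Sum>\<mu>\<le>\<nu>. of_nat (fact \<nu>) * ((-4) ^ (\<nu> - \<mu>) * A ^ \<mu> *
       (of_nat (fact (k + 2 * \<nu> - \<mu> - 2)) / (of_nat (fact \<mu>) * of_nat (fact (k + \<nu> - 2)))) *
       (deriv ^^ \<mu>) (chi (\<nu> - \<mu>) (\<nu> - \<mu>)) t))"
    by (intro sum.cong refl) (simp add: Kcoef_at_zero[OF assms(1)] derivs mult_ac)
  finally show ?thesis by (simp add: A_def sum_distrib_left atLeast0AtMost)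
qed

end
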